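(* Let $1\le k\le n$. The image of the map $P\Lambda^{n-k,k}\to\mathcal{P}((\mathbb{C}^n)^k)$, $\tau\mapsto Q_\tau$, coincides with $\mathcal{M}^2_k$.
   Context: On $\mathbb{R}^n\times(\mathbb{R}^n)^*$ with coordinates $(x,y)$ and symplectic form $\omega_s=\sum_i dx_i\wedge dy_i$, $\Lambda^{n-k,k}$ is the space of constant complex $n$-forms spanned by $dx_I\wedge dy_J$ with $|I|=n-k$, $|J|=k$, and $P\Lambda^{n-k,k}=\{\tau:\omega_s\wedge\tau=0\}$. For $w_1,\dots,w_k\in\mathbb{C}^n$ let $X_j=\langle w_j,x\rangle\sum_{l=1}^n w_{j,l}\frac{\partial}{\partial y_l}$ (bilinear pairing $\langle w,x\rangle=\sum_l w_lx_l$); $Q_\tau$ is the polynomial on $(\mathbb{C}^n)^k$ with $Q_\tau(w_1,\dots,w_k)\,dx_1\wedge\dots\wedge dx_n=\mathcal{L}_{X_1}\cdots\mathcal{L}_{X_k}\tau$ ($\mathbb{C}$-linear Lie derivative). $\mathcal{M}^2_k$ is the subspace of polynomials on $(\mathbb{C}^n)^k$ spanned by products $\Delta_\alpha\Delta_\beta$ of two $(k\times k)$-minors of the $n\times k$ matrix with columns $w_1,\dots,w_k$. *)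

theory Defs
  imports "HOL-Combinatorics.Permutations" Complex_Main
begin

text \<open>Coordinates on R^n x (R^n)^*: index i < n stands for x_i, index n + i stands for y_i.
  A constant complex m-form tau on R^{2n} is represented by its values on tuples of standard
  basis vectors: tau f = tau(e_{f 0}, ..., e_{f (m-1)}) (f :: nat => nat, indices < 2n).\<close>

type_synonym cform = "(nat \<Rightarrow> nat) \<Rightarrow> complex"

text \<open>dz_{s_0} wedge ... wedge dz_{s_{m-1}} evaluated on (e_{f 0},...,e_{f(m-1)}): a determinant.\<close>
definition basic_form :: "nat \<Rightarrow> nat list \<Rightarrow> cform" where
  "basic_form m s f = (\<Sum>\<sigma> | \<sigma> permutes {0..<m}.
       of_int (sign \<sigma>) * (\<Prod>a<m. if f (\<sigma> a) = s ! a then 1 else 0))"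

definition dxdy :: "nat \<Rightarrow> nat set \<Rightarrow> nat set \<Rightarrow> cform" where
  "dxdy n I J = basic_form n (sorted_list_of_set I @ map (\<lambda>j. n + j) (sorted_list_of_set J))"

definition Lambda :: "nat \<Rightarrow> nat \<Rightarrow> cform set" where
  "Lambda n k = {\<tau>. \<exists>c :: nat set \<times> nat set \<Rightarrow> complex.
      \<tau> = (\<lambda>f. \<Sum>(I, J) \<in> {(I, J). I \<subseteq> {0..<n} \<and> J \<subseteq> {0..<n} \<and> card I = n - k \<and> card J = k}.
                c (I, J) * dxdy n I J f)}"

definition wedge :: "nat \<Rightarrow> nat \<Rightarrow> cform \<Rightarrow> cform \<Rightarrow> cform" where
  "wedge p q \<alpha> \<beta> f = (1 / (of_nat (fact p * fact q))) *
     (\<Sum>\<sigma> | \<sigma> permutes {0..<p + q}.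
        of_int (sign \<sigma>) * \<alpha> (f \<circ> \<sigma>) * \<beta> (\<lambda>i. f (\<sigma> (i + p))))"

text \<open>The symplectic form omega_s = sum_i dx_i wedge dy_i.\<close>
definition omega_s :: "nat \<Rightarrow> cform" where
  "omega_s n f = (if f 0 < n \<and> f 1 = f 0 + n then 1
                  else if f 1 < n \<and> f 0 = f 1 + n then -1 else 0)"

definition PLambda :: "nat \<Rightarrow> nat \<Rightarrow> cform set" where
  "PLambda n k = {\<tau> \<in> Lambda n k.
      \<forall>f. (\<forall>b < n + 2. f b < 2 * n) \<longrightarrow> wedge 2 n (omega_s n) \<tau> f = 0}"

text \<open>C-linear Lie derivative of a constant m-form along the linear vector field
  X(z) = A z (A t s = coefficient of dz_s in the t-th component of X):
  (L_X tau)(v_1,...,v_m) = sum_i tau(v_1,...,A v_i,...,v_m).\<close>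
definition lie_lin :: "nat \<Rightarrow> nat \<Rightarrow> (nat \<Rightarrow> nat \<Rightarrow> complex) \<Rightarrow> cform \<Rightarrow> cform" where
  "lie_lin n m A \<tau> f = (\<Sum>i<m. \<Sum>t<2 * n. A t (f i) * \<tau> (f(i := t)))"

text \<open>Matrix of the vector field X_w = <w,x> sum_l w_l d/dy_l:
  the y_l-component is w_l * sum_s w_s x_s.\<close>
definition Xmat :: "nat \<Rightarrow> (nat \<Rightarrow> complex) \<Rightarrow> nat \<Rightarrow> nat \<Rightarrow> complex" where
  "Xmat n w t s = (if n \<le> t \<and> t < 2 * n \<and> s < n then w (t - n) * w s else 0)"

text \<open>Q_tau(w_1,...,w_k): W j l is the l-th coordinate of w_{j+1}.
  L_{X_1} ... L_{X_k} tau is evaluated on (e_{x_1},...,e_{x_n}), i.e. the coefficient of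
  dx_1 wedge ... wedge dx_n.\<close>
definition Q_tau :: "nat \<Rightarrow> nat \<Rightarrow> cform \<Rightarrow> (nat \<Rightarrow> nat \<Rightarrow> complex) \<Rightarrow> complex" where
  "Q_tau n k \<tau> W = foldr (\<lambda>j \<sigma>. lie_lin n n (Xmat n (W j)) \<sigma>) [0..<k] \<tau> (\<lambda>i. i)"

definition minor :: "nat \<Rightarrow> (nat \<Rightarrow> nat \<Rightarrow> complex) \<Rightarrow> nat set \<Rightarrow> complex" where
  "minor k W \<alpha> = (\<Sum>\<sigma> | \<sigma> permutes {0..<k}.
      of_int (sign \<sigma>) * (\<Prod>a<k. W (\<sigma> a) (sorted_list_of_set \<alpha> ! a)))"

definition M2 :: "nat \<Rightarrow> nat \<Rightarrow> ((nat \<Rightarrow> nat \<Rightarrow> complex) \<Rightarrow> complex) set" where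
  "M2 n k = {Q. \<exists>c :: nat set \<times> nat set \<Rightarrow> complex.
      Q = (\<lambda>W. \<Sum>(\<alpha>, \<beta>) \<in> {(\<alpha>, \<beta>). \<alpha> \<subseteq> {0..<n} \<and> \<beta> \<subseteq> {0..<n} \<and> card \<alpha> = k \<and> card \<beta> = k}.
                c (\<alpha>, \<beta>) * minor k W \<alpha> * minor k W \<beta>)}"

end

theory Submission
  imports Defs
begin

text \<open>
  Expanding Q_tau, each Lie derivative L_{X_w} replaces one vector e_{x_b} of the frame
  (e_{x_1}, ..., e_{x_n}) by w_b w_c e_{y_c}. On a basic form dx_I \<and> dy_J only the terms that
  replace exactly the x-vectors outside I by the y-vectors in J survive, and summing over the
  orders in which this happens gives a nonzero multiple of \<Delta>_{I^c} \<Delta>_J. Hence Q maps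
  \<Lambda>^{n-k,k} into M^2_k, and every product of two minors is hit by a basic form.

  It remains to hit these products with primitive forms. Q annihilates every \<omega>_s \<and> \<sigma>: its terms
  cancel in pairs by exchanging the Lie step that produced dy_p with one acting on dx_p. On
  coefficient functions, L = \<omega>_s \<and> - and its adjoint \<Lambda> form an sl_2-pair, and in the middle
  degree n every d splits as c + L \<sigma> with L c = 0, namely c = \<Sum>_r (-1)^r / (r! (r+1)!) L^r \<Lambda>^r d.
  The form with coefficients c is primitive and has the same image under Q as the one with
  coefficients d.
\<close>

section \<open>Alternating forms evaluated on frames\<close>

lemma basic_form_compose:
  assumes "\<pi> permutes {0..<m}"
  shows "basic_form m s (f \<circ> \<pi>) = of_int (sign \<pi>) * basic_form m s f"
proof -
  have pp: "permutation \<pi>" using assms permutes_imp_permutation by blast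
  have "basic_form m s (f \<circ> \<pi>) = (\<Sum>\<sigma> | \<sigma> permutes {0..<m}.
       of_int (sign \<sigma>) * (\<Prod>a<m. if f (\<pi> (\<sigma> a)) = s ! a then 1 else 0))"
    by (simp add: basic_form_def)
  also have "\<dots> = (\<Sum>\<sigma> | \<sigma> permutes {0..<m}.
       of_int (sign (inv \<pi> \<circ> \<sigma>)) * (\<Prod>a<m. if f (\<pi> ((inv \<pi> \<circ> \<sigma>) a)) = s ! a then 1 else 0))"
    by (rule setum_permutations_compose_left[OF permutes_inv[OF assms]])
  also have "\<dots> = (\<Sum>\<sigma> | \<sigma> permutes {0..<m}.
       of_int (sign \<pi>) * (of_int (sign \<sigma>) * (\<Prod>a<m. if f (\<sigma> a) = s ! a then 1 else 0)))"
  proof (rule sum.cong[OF refl])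
    fix \<sigma> assume "\<sigma> \<in> {\<sigma>. \<sigma> permutes {0..<m}}"
    then have "sign (inv \<pi> \<circ> \<sigma>) = sign \<pi> * sign \<sigma>"
      using pp permutes_imp_permutation[OF finite_atLeastLessThan]
      by (simp add: sign_compose sign_inverse permutation_inverse)
    moreover have "\<And>a. \<pi> ((inv \<pi> \<circ> \<sigma>) a) = \<sigma> a"
      using permutes_inverses(1)[OF assms] by simp
    ultimately show "of_int (sign (inv \<pi> \<circ> \<sigma>)) * (\<Prod>a<m. if f (\<pi> ((inv \<pi> \<circ> \<sigma>) a)) = s ! a then 1 else 0)
       = of_int (sign \<pi>) * (of_int (sign \<sigma>) * (\<Prod>a<m. if f (\<sigma> a) = s ! a then 1 else (0::complex)))"
      by simp
  qed
  also have "\<dots> = of_int (sign \<pi>) * basic_form m s f"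
    by (simp add: basic_form_def sum_distrib_left)
  finally show ?thesis .
qed

lemma basic_form_permute:
  assumes "\<pi> permutes {0..<m}" "\<And>a. a < m \<Longrightarrow> s' ! a = s ! \<pi> a"
  shows "basic_form m s' f = of_int (sign \<pi>) * basic_form m s f"
proof -
  have bij: "bij_betw \<pi> {..<m} {..<m}"
    using assms(1) permutes_imp_bij atLeast0LessThan by metis
  have prod_eq: "(\<Prod>a<m. if f (\<sigma> a) = s' ! a then 1 else (0::complex))
      = (\<Prod>b<m. if f (\<sigma> (inv \<pi> b)) = s ! b then 1 else 0)" for \<sigma>
  proof -
    have "(\<Prod>a<m. if f (\<sigma> a) = s' ! a then 1 else (0::complex))
        = (\<Prod>a<m. if f (\<sigma> (inv \<pi> (\<pi> a))) = s ! \<pi> a then 1 else 0)"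
      using assms by (simp add: permutes_inverses(2))
    also have "\<dots> = (\<Prod>b<m. if f (\<sigma> (inv \<pi> b)) = s ! b then 1 else 0)"
      by (rule prod.reindex_bij_betw[OF bij])
    finally show ?thesis .
  qed
  have "basic_form m s' f = (\<Sum>\<sigma> | \<sigma> permutes {0..<m}.
       of_int (sign \<sigma>) * (\<Prod>b<m. if f (\<sigma> (inv \<pi> b)) = s ! b then 1 else 0))"
    by (simp add: basic_form_def prod_eq)
  also have "\<dots> = (\<Sum>\<sigma> | \<sigma> permutes {0..<m}.
       of_int (sign (\<sigma> \<circ> \<pi>)) * (\<Prod>b<m. if f ((\<sigma> \<circ> \<pi>) (inv \<pi> b)) = s ! b then 1 else 0))"
    by (rule sum_permutations_compose_right[OF assms(1)])
  also have "\<dots> = (\<Sum>\<sigma> | \<sigma> permutes {0..<m}.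
       of_int (sign \<pi>) * (of_int (sign \<sigma>) * (\<Prod>b<m. if f (\<sigma> b) = s ! b then 1 else 0)))"
  proof (rule sum.cong[OF refl])
    fix \<sigma> assume "\<sigma> \<in> {\<sigma>. \<sigma> permutes {0..<m}}"
    then have "sign (\<sigma> \<circ> \<pi>) = sign \<pi> * sign \<sigma>"
      using assms(1) permutes_imp_permutation[OF finite_atLeastLessThan] by (simp add: sign_compose)
    moreover have "\<And>b. (\<sigma> \<circ> \<pi>) (inv \<pi> b) = \<sigma> b"
      using permutes_inverses(1)[OF assms(1)] by simp
    ultimately show "of_int (sign (\<sigma> \<circ> \<pi>)) * (\<Prod>b<m. if f ((\<sigma> \<circ> \<pi>) (inv \<pi> b)) = s ! b then 1 else 0)
       = of_int (sign \<pi>) * (of_int (sign \<sigma>) * (\<Prod>b<m. if f (\<sigma> b) = s ! b then 1 else (0::complex)))"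
      by simp
  qed
  also have "\<dots> = of_int (sign \<pi>) * basic_form m s f"
    by (simp add: basic_form_def sum_distrib_left)
  finally show ?thesis .
qed

lemma basic_form_transpose:
  assumes "a < m" "b < m" "a \<noteq> b" "\<And>x. x < m \<Longrightarrow> s' ! x = s ! Transposition.transpose a b x"
  shows "basic_form m s' f = - basic_form m s f"
proof -
  have "Transposition.transpose a b permutes {0..<m}"
    using assms by (intro permutes_swap_id) auto
  from basic_form_permute[OF this assms(4)] show ?thesis
    using assms(3) by (simp add: sign_swap_id)
qed

lemma basic_form_swap_adjacent:
  assumes "length P + 2 \<le> m"
  shows "basic_form m (P @ a # b # R) f = - basic_form m (P @ b # a # R) f"
  by (rule basic_form_transpose[of "length P" m "Suc (length P)"])
     (use assms in \<open>auto simp: nth_append Transposition.transpose_def nth_Cons split: nat.splits\<close>)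

lemma basic_form_repeated_eq_0:
  assumes "a < m" "b < m" "a \<noteq> b" "s ! a = s ! b"
  shows "basic_form m s f = 0"
proof -
  have "basic_form m s f = - basic_form m s f"
    by (rule basic_form_transpose) (use assms in \<open>auto simp: Transposition.transpose_def\<close>)
  then show ?thesis by simp
qed

lemma basic_form_move_pair:
  assumes "length (P @ pre @ x # y # R) \<le> m"
  shows "basic_form m (P @ pre @ x # y # R) f = basic_form m (P @ x # y # pre @ R) f"
  using assms
proof (induction pre arbitrary: P)
  case Nil
  then show ?case by simp
next
  case (Cons z pre)
  have "basic_form m (P @ (z # pre) @ x # y # R) f = basic_form m ((P @ [z]) @ x # y # pre @ R) f"
    using Cons.IH[of "P @ [z]"] Cons.prems by simp
  also have "\<dots> = - basic_form m (P @ x # z # y # pre @ R) f"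
    using basic_form_swap_adjacent[of P m z x "y # pre @ R" f] Cons.prems by simp
  also have "\<dots> = basic_form m (P @ x # y # z # pre @ R) f"
    using basic_form_swap_adjacent[of "P @ [x]" m z y "pre @ R" f] Cons.prems by simp
  finally show ?case by simp
qed

lemma basic_form_neq_0_imp_image:
  assumes "basic_form m s f \<noteq> 0" "length s = m"
  shows "f ` {..<m} = set s"
proof -
  obtain \<sigma> where \<sigma>: "\<sigma> permutes {0..<m}"
    and nz: "(\<Prod>a<m. if f (\<sigma> a) = s ! a then 1 else 0) \<noteq> (0::complex)"
  proof -
    from assms(1) obtain \<sigma> where "\<sigma> \<in> {\<sigma>. \<sigma> permutes {0..<m}}"
      "of_int (sign \<sigma>) * (\<Prod>a<m. if f (\<sigma> a) = s ! a then 1 else 0) \<noteq> (0::complex)"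
      unfolding basic_form_def by (rule sum.not_neutral_contains_not_neutral)
    then show ?thesis using that by auto
  qed
  have eq: "f (\<sigma> a) = s ! a" if "a < m" for a
  proof (rule ccontr)
    assume "f (\<sigma> a) \<noteq> s ! a"
    then have "(\<Prod>a<m. if f (\<sigma> a) = s ! a then 1 else 0) = (0::complex)"
      using that by (intro prod_zero bexI[of _ a]) auto
    with nz show False ..
  qed
  have "f ` {..<m} = f ` \<sigma> ` {..<m}"
    using permutes_image[OF \<sigma>] by (simp add: atLeast0LessThan)
  also have "\<dots> = (\<lambda>a. s ! a) ` {..<m}"
    using eq by (auto simp: image_iff)
  also have "\<dots> = set s"
    using assms(2) by (auto simp: in_set_conv_nth)
  finally show ?thesis .
qed

lemma basic_form_map_frame:
  assumes "inj_on f {..<m}"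
  shows "basic_form m (map f [0..<m]) f = 1"
proof -
  have "(\<Prod>a<m. if f (\<sigma> a) = map f [0..<m] ! a then 1 else (0::complex)) = (if \<sigma> = id then 1 else 0)"
    if \<sigma>: "\<sigma> permutes {0..<m}" for \<sigma>
  proof (cases "\<forall>a<m. \<sigma> a = a")
    case True
    then have "\<sigma> = id"
      using permutes_not_in[OF \<sigma>] by (metis atLeastLessThan_iff eq_id_iff zero_le)
    then show ?thesis by simp
  next
    case False
    then obtain a where a: "a < m" "\<sigma> a \<noteq> a" by blast
    then have "f (\<sigma> a) \<noteq> f a"
      using assms permutes_in_image[OF \<sigma>] by (simp add: inj_on_eq_iff)
    then have "(\<Prod>a<m. if f (\<sigma> a) = map f [0..<m] ! a then 1 else (0::complex)) = 0"
      using a by (intro prod_zero bexI[of _ a]) auto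
    then show ?thesis using a by auto
  qed
  then have "basic_form m (map f [0..<m]) f
      = (\<Sum>\<sigma> | \<sigma> permutes {0..<m}. if \<sigma> = id then of_int (sign \<sigma>) else 0)"
    unfolding basic_form_def by (intro sum.cong) auto
  also have "\<dots> = 1"
    using permutes_id by (simp add: finite_permutations)
  finally show ?thesis .
qed

lemma basic_form_set_eq:
  assumes "distinct s" "distinct s'" "set s = set s'" "length s = m"
  obtains \<epsilon> :: complex where "\<epsilon> = 1 \<or> \<epsilon> = -1" "basic_form m s' = (\<lambda>f. \<epsilon> * basic_form m s f)"
proof -
  have "mset s' = mset s"
    using assms by (simp add: set_eq_iff_mset_eq_distinct)
  then obtain \<pi> where \<pi>: "\<pi> permutes {..<length s}" "permute_list \<pi> s = s'"
    by (rule mset_eq_permutation)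
  have "basic_form m s' f = of_int (sign \<pi>) * basic_form m s f" for f
    using \<pi> assms(4) by (intro basic_form_permute) (auto simp: atLeast0LessThan permute_list_nth)
  moreover have "of_int (sign \<pi>) = (1::complex) \<or> of_int (sign \<pi>) = (-1::complex)"
    by (cases rule: sign_cases[of \<pi>]) auto
  ultimately show ?thesis using that by blast
qed

lemma basic_form_neq_0:
  assumes "inj_on f {..<m}" "f ` {..<m} = set s" "distinct s" "length s = m"
  shows "basic_form m s f \<noteq> 0"
proof -
  have "distinct (map f [0..<m])" "set (map f [0..<m]) = set s" "length (map f [0..<m]) = m"
    using assms(1,2) by (auto simp: distinct_map atLeast0LessThan)
  then obtain \<epsilon> :: complex where "\<epsilon> = 1 \<or> \<epsilon> = -1"
    "basic_form m s = (\<lambda>g. \<epsilon> * basic_form m (map f [0..<m]) g)"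
    using basic_form_set_eq[of "map f [0..<m]" s m] assms(3) by metis
  then show ?thesis
    using basic_form_map_frame[OF assms(1)] by auto
qed

section \<open>Wedge product and the symplectic form\<close>

definition block_perm :: "nat \<Rightarrow> nat \<Rightarrow> (nat \<Rightarrow> nat) \<Rightarrow> (nat \<Rightarrow> nat) \<Rightarrow> nat \<Rightarrow> nat" where
  "block_perm p q \<mu> \<nu> x = (if x < p then \<mu> x else if x < p + q then \<nu> (x - p) + p else x)"

lemma block_perm_permutes_and_sign:
  assumes "\<mu> permutes {0..<p}" "\<nu> permutes {0..<q}"
  shows "block_perm p q \<mu> \<nu> permutes {0..<p + q}" "sign (block_perm p q \<mu> \<nu>) = sign \<mu> * sign \<nu>"
proof -
  define \<nu>' where "\<nu>' = (\<lambda>x. if x \<in> {p..<p + q} then p + \<nu> (x - p) else x)"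
  have shift: "bij_betw (\<lambda>j. p + j) {0..<q} {p..<p + q}"
    by (simp add: bij_betw_def image_add_atLeastLessThan add.commute)
  interpret permutes_bij_finite \<nu> "{0..<q}" "{p..<p + q}" "\<lambda>j. p + j" "\<lambda>x. x - p" \<nu>'
    by unfold_locales (use assms(2) shift in \<open>auto simp: \<nu>'_def\<close>)
  have eq: "block_perm p q \<mu> \<nu> = \<mu> \<circ> \<nu>'"
  proof
    fix x
    have "\<nu> (x - p) < q" if "p \<le> x" "x < p + q"
      using that permutes_in_image[OF assms(2)] by auto
    then show "block_perm p q \<mu> \<nu> x = (\<mu> \<circ> \<nu>') x"
      using permutes_not_in[OF assms(1)] by (auto simp: block_perm_def \<nu>'_def add.commute)
  qed
  have \<mu>: "\<mu> permutes {0..<p + q}" by (rule permutes_subset[OF assms(1)]) auto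
  have \<nu>': "\<nu>' permutes {0..<p + q}" by (rule permutes_subset[OF permutes_p']) auto
  show "block_perm p q \<mu> \<nu> permutes {0..<p + q}"
    unfolding eq by (rule permutes_compose[OF \<nu>' \<mu>])
  show "sign (block_perm p q \<mu> \<nu>) = sign \<mu> * sign \<nu>"
    using \<mu> \<nu>' permutes_imp_permutation[OF finite_atLeastLessThan]
    unfolding eq by (simp add: sign_compose sign_p')
qed

lemma sum_lessThan_add:
  fixes F :: "nat \<Rightarrow> 'a::comm_monoid_add"
  shows "(\<Sum>a<p + q. F a) = (\<Sum>a<p. F a) + (\<Sum>a<q. F (a + p))"
proof -
  have "(\<Sum>a<p + q. F a) = (\<Sum>a<p. F a) + (\<Sum>a\<in>{p..<p + q}. F a)"
    using sum.atLeastLessThan_concat[of 0 p "p + q" F] by (simp add: atLeast0LessThan)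
  also have "(\<Sum>a\<in>{p..<p + q}. F a) = (\<Sum>a<q. F (a + p))"
    using sum.shift_bounds_nat_ivl[of F 0 p q] by (simp add: atLeast0LessThan add.commute)
  finally show ?thesis .
qed

lemma prod_lessThan_add:
  fixes F :: "nat \<Rightarrow> 'a::comm_monoid_mult"
  shows "(\<Prod>a<p + q. F a) = (\<Prod>a<p. F a) * (\<Prod>a<q. F (a + p))"
proof -
  have "(\<Prod>a<p + q. F a) = (\<Prod>a<p. F a) * (\<Prod>a\<in>{p..<p + q}. F a)"
    using prod.atLeastLessThan_concat[of 0 p "p + q" F] by (simp add: atLeast0LessThan)
  also have "(\<Prod>a\<in>{p..<p + q}. F a) = (\<Prod>a<q. F (a + p))"
    using prod.shift_bounds_nat_ivl[of F 0 p q] by (simp add: atLeast0LessThan add.commute)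
  finally show ?thesis .
qed

lemma basic_form_mult_eq_sum_block_perm:
  assumes "length s = p" "\<sigma> permutes {0..<p + q}"
  shows "of_int (sign \<sigma>) * basic_form p s (f \<circ> \<sigma>) * basic_form q t (\<lambda>i. f (\<sigma> (i + p)))
    = (\<Sum>\<mu> | \<mu> permutes {0..<p}. \<Sum>\<nu> | \<nu> permutes {0..<q}. of_int (sign (\<sigma> \<circ> block_perm p q \<mu> \<nu>)) *
        (\<Prod>a<p + q. if f ((\<sigma> \<circ> block_perm p q \<mu> \<nu>) a) = (s @ t) ! a then 1 else 0))"
proof -
  have "of_int (sign \<sigma>) * basic_form p s (f \<circ> \<sigma>) * basic_form q t (\<lambda>i. f (\<sigma> (i + p)))
    = (\<Sum>\<mu> | \<mu> permutes {0..<p}. \<Sum>\<nu> | \<nu> permutes {0..<q}. of_int (sign \<sigma>) * ((of_int (sign \<mu>) *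
        (\<Prod>a<p. if f (\<sigma> (\<mu> a)) = s ! a then 1 else 0)) * (of_int (sign \<nu>) *
        (\<Prod>a<q. if f (\<sigma> (\<nu> a + p)) = t ! a then 1 else 0))))"
    unfolding basic_form_def by (simp add: sum_distrib_left sum_distrib_right mult.assoc) (rule sum.swap)
  also have "\<dots> = (\<Sum>\<mu> | \<mu> permutes {0..<p}. \<Sum>\<nu> | \<nu> permutes {0..<q}. of_int (sign (\<sigma> \<circ> block_perm p q \<mu> \<nu>)) *
        (\<Prod>a<p + q. if f ((\<sigma> \<circ> block_perm p q \<mu> \<nu>) a) = (s @ t) ! a then 1 else 0))"
  proof (intro sum.cong refl, clarify)
    fix \<mu> \<nu> assume \<mu>\<nu>: "\<mu> permutes {0..<p}" "\<nu> permutes {0..<q}"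
    note block = block_perm_permutes_and_sign[OF \<mu>\<nu>]
    have "permutation \<sigma>" "permutation (block_perm p q \<mu> \<nu>)"
      using assms(2) block permutes_imp_permutation[OF finite_atLeastLessThan] by auto
    moreover have prod: "(\<Prod>a<p + q. if f ((\<sigma> \<circ> block_perm p q \<mu> \<nu>) a) = (s @ t) ! a then 1 else (0::complex))
      = (\<Prod>a<p. if f (\<sigma> (\<mu> a)) = s ! a then 1 else 0) *
        (\<Prod>a<q. if f (\<sigma> (\<nu> a + p)) = t ! a then 1 else 0)"
      unfolding prod_lessThan_add using assms(1) by (simp add: block_perm_def nth_append)
    ultimately show "of_int (sign \<sigma>) * ((of_int (sign \<mu>) *
        (\<Prod>a<p. if f (\<sigma> (\<mu> a)) = s ! a then 1 else (0::complex))) * (of_int (sign \<nu>) *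
        (\<Prod>a<q. if f (\<sigma> (\<nu> a + p)) = t ! a then 1 else 0)))
      = of_int (sign (\<sigma> \<circ> block_perm p q \<mu> \<nu>)) *
        (\<Prod>a<p + q. if f ((\<sigma> \<circ> block_perm p q \<mu> \<nu>) a) = (s @ t) ! a then 1 else 0)"
      using block unfolding prod by (simp add: sign_compose mult_ac)
  qed
  finally show ?thesis .
qed

lemma wedge_basic_form:
  assumes "length s = p"
  shows "wedge p q (basic_form p s) (basic_form q t) f = basic_form (p + q) (s @ t) f"
proof -
  let ?P = "\<lambda>m. {\<sigma>. \<sigma> permutes {0..<m}}"
  define H where "H \<sigma> = of_int (sign \<sigma>) *
      (\<Prod>a<p + q. if f (\<sigma> a) = (s @ t) ! a then 1 else (0::complex))" for \<sigma>
  have "wedge p q (basic_form p s) (basic_form q t) f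
      = 1 / of_nat (fact p * fact q) * (\<Sum>\<sigma>\<in>?P (p + q). \<Sum>\<mu>\<in>?P p. \<Sum>\<nu>\<in>?P q. H (\<sigma> \<circ> block_perm p q \<mu> \<nu>))"
    unfolding wedge_def H_def using basic_form_mult_eq_sum_block_perm[OF assms] by simp
  also have "(\<Sum>\<sigma>\<in>?P (p + q). \<Sum>\<mu>\<in>?P p. \<Sum>\<nu>\<in>?P q. H (\<sigma> \<circ> block_perm p q \<mu> \<nu>))
      = (\<Sum>\<mu>\<in>?P p. \<Sum>\<nu>\<in>?P q. \<Sum>\<sigma>\<in>?P (p + q). H (\<sigma> \<circ> block_perm p q \<mu> \<nu>))"
    by (subst sum.swap) (rule sum.cong[OF refl], rule sum.swap)
  also have "\<dots> = (\<Sum>\<mu>\<in>?P p. \<Sum>\<nu>\<in>?P q. \<Sum>\<sigma>\<in>?P (p + q). H \<sigma>)"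
    using block_perm_permutes_and_sign(1)
    by (intro sum.cong refl sum_permutations_compose_right[symmetric]) auto
  also have "\<dots> = of_nat (fact p * fact q) * basic_form (p + q) (s @ t) f"
    by (simp add: card_permutations H_def basic_form_def)
  finally show ?thesis by simp
qed

lemma wedge_sum:
  "wedge p q (\<lambda>g. \<Sum>i\<in>S. \<alpha> i g) (\<lambda>g. \<Sum>x\<in>T. c x * \<beta> x g) f
     = (\<Sum>i\<in>S. \<Sum>x\<in>T. c x * wedge p q (\<alpha> i) (\<beta> x) f)"
proof -
  let ?P = "{\<sigma>. \<sigma> permutes {0..<p + q}}" and ?K = "1 / of_nat (fact p * fact q) :: complex"
  have "wedge p q (\<lambda>g. \<Sum>i\<in>S. \<alpha> i g) (\<lambda>g. \<Sum>x\<in>T. c x * \<beta> x g) f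
      = ?K * (\<Sum>\<sigma>\<in>?P. \<Sum>i\<in>S. \<Sum>x\<in>T. c x * (of_int (sign \<sigma>) * \<alpha> i (f \<circ> \<sigma>) * \<beta> x (\<lambda>j. f (\<sigma> (j + p)))))"
    unfolding wedge_def by (simp add: sum_distrib_left sum_distrib_right mult_ac)
      (rule sum.cong[OF refl], rule sum.swap)
  also have "\<dots> = ?K * (\<Sum>i\<in>S. \<Sum>x\<in>T. \<Sum>\<sigma>\<in>?P. c x * (of_int (sign \<sigma>) * \<alpha> i (f \<circ> \<sigma>) * \<beta> x (\<lambda>j. f (\<sigma> (j + p)))))"
    by (subst sum.swap) (rule arg_cong[where f="\<lambda>x. ?K * x"], rule sum.cong[OF refl], rule sum.swap)
  finally show ?thesis
    unfolding wedge_def by (simp add: sum_distrib_left mult_ac)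
qed

lemma basic_form_2:
  "basic_form 2 [x, y] g = (if g 0 = x \<and> g 1 = y then 1 else 0) - (if g 1 = x \<and> g 0 = y then 1 else 0)"
proof -
  have perms: "{\<sigma>. \<sigma> permutes {0..<2::nat}} = {id, Transposition.transpose 0 1}"
  proof -
    have "{0..<2::nat} = {0, 1}" by auto
    then show ?thesis by (auto simp: permutes_doubleton_iff)
  qed
  have ne: "id \<noteq> Transposition.transpose (0::nat) 1"
    by (metis id_apply transpose_apply_first zero_neq_one)
  have prod2: "(\<Prod>a<2. F a) = F 0 * F 1" for F :: "nat \<Rightarrow> complex"
    by (simp add: numeral_2_eq_2)
  have "basic_form 2 [x, y] g = (\<Prod>a<2. if g a = [x, y] ! a then 1 else 0)
     - (\<Prod>a<2. if g (Transposition.transpose 0 1 a) = [x, y] ! a then 1 else 0)"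
    unfolding basic_form_def perms using ne by (simp add: sign_swap_id)
  also have "\<dots> = (if g 0 = x \<and> g 1 = y then 1 else 0) - (if g 1 = x \<and> g 0 = y then 1 else 0)"
  proof -
    have "Transposition.transpose 0 1 (0::nat) = 1" "Transposition.transpose 0 1 (1::nat) = 0"
      by auto
    moreover have "(if A then 1 else 0) * (if B then 1 else 0) = (if A \<and> B then 1 else (0::complex))"
      for A B by simp
    ultimately show ?thesis
      unfolding prod2 by simp
  qed
  finally show ?thesis .
qed

lemma omega_s_eq_sum: "omega_s n = (\<lambda>g. \<Sum>i<n. basic_form 2 [i, n + i] g)"
proof
  fix g
  have "(\<Sum>i<n. basic_form 2 [i, n + i] g)
      = (\<Sum>i<n. if i = g 0 then (if g 1 = n + i then 1 else 0) else 0)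
      - (\<Sum>i<n. if i = g 1 then (if g 0 = n + i then 1 else 0) else 0)"
    unfolding basic_form_2 sum_subtractf[symmetric] by (intro sum.cong) auto
  then show "omega_s n g = (\<Sum>i<n. basic_form 2 [i, n + i] g)"
    by (simp add: omega_s_def add.commute)
qed

definition interleave_block :: "nat \<Rightarrow> nat set \<Rightarrow> nat set \<Rightarrow> nat \<Rightarrow> nat list" where
  "interleave_block n A B i = (if i \<in> A then [i] else []) @ (if i \<in> B then [n + i] else [])"

text \<open>The word of dx_A \<and> dy_B in which dx_i and dy_i are adjacent; in this ordering
  wedging with dx_p \<and> dy_p merely inserts a block.\<close>
definition interleaved :: "nat \<Rightarrow> nat set \<Rightarrow> nat set \<Rightarrow> nat list" where
  "interleaved n A B = concat (map (interleave_block n A B) [0..<n])"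

lemma set_concat_interleave_block:
  "set (concat (map (interleave_block n A B) xs))
     = {i \<in> set xs. i \<in> A} \<union> (\<lambda>i. n + i) ` {i \<in> set xs. i \<in> B}"
  by (induction xs) (auto simp: interleave_block_def)

lemma set_interleaved:
  "A \<subseteq> {..<n} \<Longrightarrow> B \<subseteq> {..<n} \<Longrightarrow> set (interleaved n A B) = A \<union> (\<lambda>i. n + i) ` B"
  unfolding interleaved_def set_concat_interleave_block by auto

lemma distinct_interleaved: "distinct (interleaved n A B)"
proof -
  have "distinct (concat (map (interleave_block n A B) xs))" if "distinct xs" "set xs \<subseteq> {..<n}" for xs
    using that
  proof (induction xs)
    case (Cons x xs)
    then show ?case
      unfolding set_concat_interleave_block by (auto simp: interleave_block_def)
  qed simp
  from this[of "[0..<n]"] show ?thesis by (simp add: interleaved_def atLeast0LessThan)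
qed

lemma length_interleaved:
  assumes "A \<subseteq> {..<n}" "B \<subseteq> {..<n}"
  shows "length (interleaved n A B) = card A + card B"
proof -
  have "finite A" "finite B" using assms finite_subset by auto
  then have "card (A \<union> (\<lambda>i. n + i) ` B) = card A + card B"
    using assms by (subst card_Un_disjoint) (auto simp: card_image)
  then show ?thesis
    using distinct_card[OF distinct_interleaved] set_interleaved[OF assms] by metis
qed

lemma interleaved_insert:
  assumes "p < n" "p \<notin> A" "p \<notin> B"
  obtains pre suf where "interleaved n A B = pre @ suf"
    "interleaved n (insert p A) (insert p B) = pre @ p # (n + p) # suf"
proof
  have upt: "[0..<n] = [0..<p] @ p # [Suc p..<n]"
    using upt_add_eq_append[of 0 p "n - p"] upt_conv_Cons[of p n] assms(1) by simp
  have eq: "map (interleave_block n (insert p A) (insert p B)) [0..<p] = map (interleave_block n A B) [0..<p]"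
    "map (interleave_block n (insert p A) (insert p B)) [Suc p..<n] = map (interleave_block n A B) [Suc p..<n]"
    by (auto simp: interleave_block_def)
  have p: "interleave_block n (insert p A) (insert p B) p = [p, n + p]" "interleave_block n A B p = []"
    using assms by (auto simp: interleave_block_def)
  show "interleaved n (insert p A) (insert p B)
      = concat (map (interleave_block n A B) [0..<p]) @ p # (n + p) # concat (map (interleave_block n A B) [Suc p..<n])"
    unfolding interleaved_def upt by (simp add: eq p)
  show "interleaved n A B = concat (map (interleave_block n A B) [0..<p]) @ concat (map (interleave_block n A B) [Suc p..<n])"
    unfolding interleaved_def upt by (simp add: p)
qed

lemma basic_form_pair_interleaved:
  assumes "p < n" "A \<subseteq> {..<n}" "B \<subseteq> {..<n}" "card A + card B + 2 \<le> m"
  shows "basic_form m (p # (n + p) # interleaved n A B) f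
       = (if p \<in> A \<or> p \<in> B then 0 else basic_form m (interleaved n (insert p A) (insert p B)) f)"
proof (cases "p \<in> A \<or> p \<in> B")
  case True
  then obtain j where "j < length (interleaved n A B)"
    "interleaved n A B ! j = p \<or> interleaved n A B ! j = n + p"
    using set_interleaved[OF assms(2,3)] by (metis UnI1 UnI2 image_eqI in_set_conv_nth)
  then have "basic_form m (p # (n + p) # interleaved n A B) f = 0"
    using length_interleaved[OF assms(2,3)] assms(4)
    by (auto intro: basic_form_repeated_eq_0[of 0 m "j + 2"] basic_form_repeated_eq_0[of 1 m "j + 2"])
  then show ?thesis using True by simp
next
  case False
  then obtain pre suf where "interleaved n A B = pre @ suf"
    "interleaved n (insert p A) (insert p B) = pre @ p # (n + p) # suf"
    using interleaved_insert[OF assms(1)] by blast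
  moreover have "length (interleaved n A B) + 2 \<le> m"
    using length_interleaved[OF assms(2,3)] assms(4) by simp
  ultimately show ?thesis
    using False basic_form_move_pair[of "[]" pre p "n + p" suf m f] by simp
qed

section \<open>The iterated Lie derivative\<close>

definition index_of :: "'a list \<Rightarrow> 'a \<Rightarrow> nat" where
  "index_of xs x = (THE i. i < length xs \<and> xs ! i = x)"

lemma index_of_nth:
  assumes "distinct xs" "i < length xs"
  shows "index_of xs (xs ! i) = i"
  unfolding index_of_def
  by (rule the_equality) (use assms nth_eq_iff_index_eq in auto)

lemma index_of_in:
  assumes "distinct xs" "x \<in> set xs"
  shows "index_of xs x < length xs" "xs ! index_of xs x = x"
  using assms index_of_nth by (metis in_set_conv_nth)+

text \<open>Each L_{X_w} replaces one vector e_{x_b} of the frame (e_{x_1}, ..., e_{x_n}) by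
  w_b w_c e_{y_c}; after j steps the frame has e_{y_{ls ! i}} in place of e_{x_{ix ! i}}.\<close>
definition lie_frame :: "nat \<Rightarrow> nat list \<Rightarrow> nat list \<Rightarrow> nat \<Rightarrow> nat" where
  "lie_frame n ix ls b = (if b \<in> set ix then n + ls ! index_of ix b else b)"

definition words :: "nat \<Rightarrow> nat \<Rightarrow> nat list set" where
  "words n k = {ls. length ls = k \<and> set ls \<subseteq> {..<n}}"

definition distinct_words :: "nat \<Rightarrow> nat \<Rightarrow> nat list set" where
  "distinct_words n k = {ix. ix \<in> words n k \<and> distinct ix}"

definition lie_weight :: "(nat \<Rightarrow> nat \<Rightarrow> complex) \<Rightarrow> nat list \<Rightarrow> nat list \<Rightarrow> complex" where
  "lie_weight W ix ls = (\<Prod>j<length ix. W j (ix ! j) * W j (ls ! j))"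

lemma finite_words: "finite (words n k)"
  using finite_lists_length_eq[of "{..<n}" k] by (simp add: words_def conj_commute)

lemma finite_distinct_words: "finite (distinct_words n k)"
  using finite_words by (simp add: distinct_words_def)

lemma words_Suc: "words n (Suc k) = (\<lambda>(xs, b). xs @ [b]) ` (words n k \<times> {..<n})"
  by (auto simp: words_def image_iff length_Suc_conv_rev)

lemma distinct_words_Suc:
  "distinct_words n (Suc k) = (\<lambda>(xs, b). xs @ [b]) ` (SIGMA xs:distinct_words n k. {..<n} - set xs)"
  by (auto simp: distinct_words_def words_def image_iff length_Suc_conv_rev)

lemma lie_frame_notin: "b \<notin> set ix \<Longrightarrow> lie_frame n ix ls b = b"
  by (simp add: lie_frame_def)

lemma lie_frame_in: "b \<in> set ix \<Longrightarrow> n \<le> lie_frame n ix ls b"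
  by (simp add: lie_frame_def)

lemma lie_frame_snoc:
  assumes "distinct ix" "b \<notin> set ix" "length ls = length ix"
  shows "(lie_frame n ix ls)(b := n + c) = lie_frame n (ix @ [b]) (ls @ [c])"
proof
  fix x
  show "((lie_frame n ix ls)(b := n + c)) x = lie_frame n (ix @ [b]) (ls @ [c]) x"
  proof (cases "x \<in> set ix")
    case True
    have "index_of (ix @ [b]) x = index_of ix x"
      using index_of_nth[of "ix @ [b]" "index_of ix x"] index_of_in[OF assms(1) True] assms
      by (simp add: nth_append)
    then show ?thesis
      using True assms index_of_in[OF assms(1) True] by (auto simp: lie_frame_def nth_append)
  next
    case False
    have "index_of (ix @ [b]) b = length ix"
      using index_of_nth[of "ix @ [b]" "length ix"] assms by simp
    then show ?thesis using False assms(3) by (simp add: lie_frame_def nth_append)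
  qed
qed

lemma lie_lin_Xmat_lie_frame:
  assumes "distinct ix" "length ls = length ix"
  shows "lie_lin n n (Xmat n w) \<tau> (lie_frame n ix ls)
     = (\<Sum>b\<in>{..<n} - set ix. \<Sum>c<n. w b * w c * \<tau> (lie_frame n (ix @ [b]) (ls @ [c])))"
proof -
  let ?g = "lie_frame n ix ls"
  let ?T = "\<lambda>i. \<Sum>t<2 * n. Xmat n w t (?g i) * \<tau> (?g(i := t))"
  have "lie_lin n n (Xmat n w) \<tau> ?g = (\<Sum>i<n. ?T i)"
    by (simp add: lie_lin_def)
  also have "\<dots> = (\<Sum>i\<in>{..<n} - set ix. ?T i)"
  proof (rule sum.mono_neutral_right)
    have "?T i = 0" if "i \<in> set ix" for i
      using lie_frame_in[OF that, of n ls] by (simp add: Xmat_def)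
    then show "\<forall>i\<in>{..<n} - ({..<n} - set ix). ?T i = 0" by blast
  qed auto
  also have "\<dots> = (\<Sum>b\<in>{..<n} - set ix. \<Sum>c<n. w b * w c * \<tau> (lie_frame n (ix @ [b]) (ls @ [c])))"
  proof (rule sum.cong[OF refl])
    fix b assume b: "b \<in> {..<n} - set ix"
    have "?T b = (\<Sum>c<n. Xmat n w (c + n) b * \<tau> (?g(b := c + n)))"
      using b sum_lessThan_add[of "\<lambda>t. Xmat n w t (?g b) * \<tau> (?g(b := t))" n n]
      by (simp add: mult_2 Xmat_def lie_frame_notin)
    also have "\<dots> = (\<Sum>c<n. w b * w c * \<tau> (lie_frame n (ix @ [b]) (ls @ [c])))"
      using b lie_frame_snoc[OF assms(1) _ assms(2), of b n] by (simp add: Xmat_def add.commute mult.commute)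
    finally show "?T b = (\<Sum>c<n. w b * w c * \<tau> (lie_frame n (ix @ [b]) (ls @ [c])))" .
  qed
  finally show ?thesis .
qed

lemma Q_tau_Suc: "Q_tau n (Suc k) \<tau> W = Q_tau n k (lie_lin n n (Xmat n (W k)) \<tau>) W"
  by (simp add: Q_tau_def)

lemma Q_tau_expansion:
  "Q_tau n k \<tau> W = (\<Sum>ix\<in>distinct_words n k. \<Sum>ls\<in>words n k. lie_weight W ix ls * \<tau> (lie_frame n ix ls))"
proof (induction k arbitrary: \<tau>)
  case 0
  have "distinct_words n 0 = {[]}" "words n 0 = {[]}"
    by (auto simp: distinct_words_def words_def)
  moreover have "lie_frame n [] [] = (\<lambda>i. i)"
    by (simp add: lie_frame_def fun_eq_iff)
  ultimately show ?case by (simp add: Q_tau_def lie_weight_def)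
next
  case (Suc k)
  let ?t = "\<lambda>ix ls. lie_weight W ix ls * \<tau> (lie_frame n ix ls)"
  have weight_snoc: "lie_weight W (ix @ [b]) (ls @ [c]) = lie_weight W ix ls * (W k b * W k c)"
    if "ix \<in> distinct_words n k" "ls \<in> words n k" for ix ls b c
    using that by (simp add: lie_weight_def nth_append distinct_words_def words_def)
  have "Q_tau n (Suc k) \<tau> W = (\<Sum>ix\<in>distinct_words n k. \<Sum>ls\<in>words n k. \<Sum>b\<in>{..<n} - set ix. \<Sum>c<n.
        ?t (ix @ [b]) (ls @ [c]))"
    unfolding Q_tau_Suc Suc.IH
    by (intro sum.cong refl)
      (simp add: lie_lin_Xmat_lie_frame distinct_words_def words_def weight_snoc sum_distrib_left mult.assoc)
  also have "\<dots> = (\<Sum>ix\<in>distinct_words n k. \<Sum>b\<in>{..<n} - set ix. \<Sum>q\<in>words n k \<times> {..<n}.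
        ?t (ix @ [b]) (fst q @ [snd q]))"
    by (subst sum.swap) (simp add: sum.cartesian_product split_def)
  also have "\<dots> = (\<Sum>p\<in>(SIGMA xs:distinct_words n k. {..<n} - set xs). \<Sum>q\<in>words n k \<times> {..<n}.
        ?t (fst p @ [snd p]) (fst q @ [snd q]))"
    by (subst sum.Sigma) (auto simp: finite_distinct_words split_def)
  also have "\<dots> = (\<Sum>ix\<in>distinct_words n (Suc k). \<Sum>ls\<in>words n (Suc k). ?t ix ls)"
    unfolding distinct_words_Suc words_Suc
    by (simp add: sum.reindex inj_on_def split_def)
  finally show ?case .
qed

lemma Q_tau_sum:
  assumes "finite S"
  shows "Q_tau n k (\<lambda>f. \<Sum>x\<in>S. c x * \<tau> x f) W = (\<Sum>x\<in>S. c x * Q_tau n k (\<tau> x) W)"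
  unfolding Q_tau_expansion
  by (simp add: sum_distrib_left sum_distrib_right sum.swap[of _ S] mult.assoc mult.left_commute[of "c _"])

section \<open>Q on a basic form\<close>

definition arrangements :: "'a set \<Rightarrow> 'a list set" where
  "arrangements X = {xs. distinct xs \<and> set xs = X}"

lemma bij_betw_permute_list_arrangements:
  assumes "finite X" "card X = k"
  shows "bij_betw (\<lambda>\<pi>. permute_list \<pi> (sorted_list_of_set X)) {\<pi>. \<pi> permutes {..<k}} (arrangements X)"
proof (rule bij_betw_imageI)
  let ?e = "sorted_list_of_set X"
  have e: "length ?e = k" "distinct ?e" "set ?e = X" using assms by auto
  show "inj_on (\<lambda>\<pi>. permute_list \<pi> ?e) {\<pi>. \<pi> permutes {..<k}}"
  proof (rule inj_onI)
    fix \<pi> \<rho> assume \<pi>\<rho>: "\<pi> \<in> {\<pi>. \<pi> permutes {..<k}}" "\<rho> \<in> {\<pi>. \<pi> permutes {..<k}}"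
      and eq: "permute_list \<pi> ?e = permute_list \<rho> ?e"
    have "\<pi> j = \<rho> j" if "j < k" for j
    proof -
      have "?e ! \<pi> j = ?e ! \<rho> j"
        using arg_cong[OF eq, of "\<lambda>xs. xs ! j"] \<pi>\<rho> e that by (simp add: permute_list_nth)
      moreover have "\<pi> j < k" "\<rho> j < k"
        using \<pi>\<rho> that permutes_in_image by fastforce+
      ultimately show ?thesis using e nth_eq_iff_index_eq by metis
    qed
    then show "\<pi> = \<rho>"
      using \<pi>\<rho> by (metis lessThan_iff mem_Collect_eq permutes_not_in ext)
  qed
  show "(\<lambda>\<pi>. permute_list \<pi> ?e) ` {\<pi>. \<pi> permutes {..<k}} = arrangements X"
  proof (intro set_eqI iffI)
    fix xs assume "xs \<in> arrangements X"
    then have "mset xs = mset ?e"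
      using e set_eq_iff_mset_eq_distinct[of xs ?e] by (simp add: arrangements_def)
    then obtain \<pi> where "\<pi> permutes {..<length ?e}" "permute_list \<pi> ?e = xs"
      by (rule mset_eq_permutation)
    then show "xs \<in> (\<lambda>\<pi>. permute_list \<pi> ?e) ` {\<pi>. \<pi> permutes {..<k}}"
      using e by auto
  next
    fix xs assume "xs \<in> (\<lambda>\<pi>. permute_list \<pi> ?e) ` {\<pi>. \<pi> permutes {..<k}}"
    then obtain \<pi> where "\<pi> permutes {..<length ?e}" "xs = permute_list \<pi> ?e"
      using e by auto
    then show "xs \<in> arrangements X"
      using e by (simp add: arrangements_def)
  qed
qed

lemma minor_eq_sum_permute_rows:
  "minor k W \<alpha> = (\<Sum>\<pi> | \<pi> permutes {..<k}. of_int (sign \<pi>) * (\<Prod>j<k. W j (sorted_list_of_set \<alpha> ! \<pi> j)))"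
proof -
  let ?e = "sorted_list_of_set \<alpha>"
  have "minor k W \<alpha> = (\<Sum>\<pi> | \<pi> permutes {..<k}. of_int (sign (inv \<pi>)) * (\<Prod>a<k. W (inv \<pi> a) (?e ! a)))"
    unfolding minor_def atLeast0LessThan by (rule sum_permutations_inverse)
  also have "\<dots> = (\<Sum>\<pi> | \<pi> permutes {..<k}. of_int (sign \<pi>) * (\<Prod>j<k. W j (?e ! \<pi> j)))"
  proof (rule sum.cong[OF refl])
    fix \<pi> assume "\<pi> \<in> {\<pi>. \<pi> permutes {..<k}}"
    then have \<pi>: "\<pi> permutes {..<k}" by simp
    have "(\<Prod>j<k. W j (?e ! \<pi> j)) = (\<Prod>j<k. W (inv \<pi> (\<pi> j)) (?e ! \<pi> j))"
      using permutes_inverses(2)[OF \<pi>] by simp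
    also have "\<dots> = (\<Prod>a<k. W (inv \<pi> a) (?e ! a))"
      by (rule prod.reindex_bij_betw[OF permutes_imp_bij[OF \<pi>]])
    finally show "of_int (sign (inv \<pi>)) * (\<Prod>a<k. W (inv \<pi> a) (?e ! a)) = of_int (sign \<pi>) * (\<Prod>j<k. W j (?e ! \<pi> j))"
      using \<pi> by (simp add: sign_inverse permutes_imp_permutation[OF finite_lessThan])
  qed
  finally show ?thesis .
qed

lemma lie_frame_image:
  assumes "ix \<in> distinct_words n k" "ls \<in> words n k"
  shows "lie_frame n ix ls ` {..<n} = ({..<n} - set ix) \<union> (\<lambda>c. n + c) ` set ls"
proof -
  have ix: "distinct ix" "set ix \<subseteq> {..<n}" "length ls = length ix"
    using assms by (auto simp: distinct_words_def words_def)
  have "lie_frame n ix ls (ix ! j) = n + ls ! j" if "j < length ix" for j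
    using index_of_nth[OF ix(1) that] that by (simp add: lie_frame_def)
  moreover have set_nth: "set xs = (\<lambda>j. xs ! j) ` {..<length xs}" for xs :: "nat list"
    by (auto simp: in_set_conv_nth)
  ultimately have "lie_frame n ix ls ` set ix = (\<lambda>c. n + c) ` set ls"
    using ix(3) by (simp add: image_image set_nth[of ix] set_nth[of ls])
  moreover have "lie_frame n ix ls ` ({..<n} - set ix) = {..<n} - set ix"
    by (simp add: lie_frame_notin)
  moreover have "{..<n} = ({..<n} - set ix) \<union> set ix"
    using ix(2) by auto
  ultimately show ?thesis by (metis image_Un sup_commute)
qed

lemma lie_frame_permute_list:
  assumes "distinct e1" "length e1 = k" "length e2 = k" "\<pi> permutes {..<k}" "\<rho> permutes {..<k}"
  obtains \<theta> where "\<theta> permutes set e1" "sign \<theta> = sign \<rho> * sign \<pi>"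
    "lie_frame n (permute_list \<pi> e1) (permute_list \<rho> e2) = lie_frame n e1 e2 \<circ> \<theta>"
proof -
  define p where "p = \<rho> \<circ> inv \<pi>"
  have p: "p permutes {..<k}"
    unfolding p_def using assms(4,5) by (intro permutes_compose permutes_inv)
  define \<theta> where "\<theta> = (\<lambda>x. if x \<in> set e1 then e1 ! p (index_of e1 x) else x)"
  have e1: "bij_betw (\<lambda>j. e1 ! j) {..<k} (set e1)"
    using assms(1,2) by (metis bij_betw_nth lessThan_atLeast0)
  interpret permutes_bij_finite p "{..<k}" "set e1" "\<lambda>j. e1 ! j" "index_of e1" \<theta>
    unfolding \<theta>_def by unfold_locales (use p e1 assms(1,2) index_of_nth in auto)
  have "sign p = sign \<rho> * sign \<pi>"
    unfolding p_def using assms(4,5) permutes_imp_permutation[OF finite_lessThan]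
    by (simp add: sign_compose permutation_inverse sign_inverse)
  moreover have "lie_frame n (permute_list \<pi> e1) (permute_list \<rho> e2) b = lie_frame n e1 e2 (\<theta> b)" for b
  proof (cases "b \<in> set e1")
    case True
    define j where "j = index_of e1 b"
    have j: "j < k" "e1 ! j = b" using index_of_in[OF assms(1) True] assms(2) by (auto simp: j_def)
    have ij: "inv \<pi> j < k" "\<pi> (inv \<pi> j) = j"
      using j permutes_in_image[OF permutes_inv[OF assms(4)]] permutes_inverses(1)[OF assms(4)] by auto
    have "index_of (permute_list \<pi> e1) b = inv \<pi> j"
      using index_of_nth[of "permute_list \<pi> e1" "inv \<pi> j"] ij j assms
      by (simp add: permute_list_nth)
    moreover have "p j < k" using j permutes_in_image[OF p] by auto
    ultimately show ?thesis
      using True ij j assms index_of_nth[OF assms(1), of "p j"] nth_mem[of "p j" e1]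
      by (simp add: lie_frame_def \<theta>_def permute_list_nth p_def j_def[symmetric])
  next
    case False
    then show ?thesis using assms by (simp add: lie_frame_notin \<theta>_def)
  qed
  ultimately show ?thesis
    using that permutes_p' sign_p' by (auto simp: fun_eq_iff)
qed

lemma set_eq_x_part_Un_y_part:
  fixes s :: "nat list"
  assumes "set s \<subseteq> {..<2 * n}"
  shows "set s = ({..<n} - ({..<n} - set s)) \<union> (\<lambda>c. n + c) ` {c. n + c \<in> set s}"
proof (intro set_eqI iffI)
  fix x assume "x \<in> set s"
  then show "x \<in> ({..<n} - ({..<n} - set s)) \<union> (\<lambda>c. n + c) ` {c. n + c \<in> set s}"
    by (cases "x < n") (auto simp: image_iff intro!: exI[of _ "x - n"])
qed auto

lemma card_missing_x_eq_card_y_part: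
  assumes "distinct s" "length s = n" "set s \<subseteq> {..<2 * n}"
  shows "card ({..<n} - set s) = card {c. n + c \<in> set s}"
proof -
  have "{c. n + c \<in> set s} \<subseteq> {..<n}" using assms(3) by auto
  then have fin: "finite {c. n + c \<in> set s}" by (rule finite_subset) simp
  have "n = card (set s)" using assms(1,2) distinct_card by metis
  also have "\<dots> = card ({..<n} - ({..<n} - set s)) + card ((\<lambda>c. n + c) ` {c. n + c \<in> set s})"
    by (subst set_eq_x_part_Un_y_part[OF assms(3)], rule card_Un_disjoint) (auto simp: fin)
  also have "\<dots> = (n - card ({..<n} - set s)) + card {c. n + c \<in> set s}"
    by (simp add: card_Diff_subset card_image)
  finally show ?thesis using card_mono[of "{..<n}" "{..<n} - set s"] by simp
qed

lemma basic_form_lie_frame_eq_0: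
  assumes "ix \<in> distinct_words n k" "ls \<in> words n k" "length s = n" "set s \<subseteq> {..<2 * n}"
    "card {c. n + c \<in> set s} = k"
    "(ix, ls) \<notin> arrangements ({..<n} - set s) \<times> arrangements {c. n + c \<in> set s}"
  shows "basic_form n s (lie_frame n ix ls) = 0"
proof (rule ccontr)
  assume "basic_form n s (lie_frame n ix ls) \<noteq> 0"
  then have "set s = ({..<n} - set ix) \<union> (\<lambda>c. n + c) ` set ls"
    using basic_form_neq_0_imp_image[OF _ assms(3)] lie_frame_image[OF assms(1,2)] by simp
  moreover have "set ix \<subseteq> {..<n}" "length ls = k" "distinct ix"
    using assms(1,2) by (auto simp: distinct_words_def words_def)
  ultimately have "set ix = {..<n} - set s" "set ls = {c. n + c \<in> set s}"
    by auto
  moreover have "distinct ls"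
    using \<open>set ls = _\<close> \<open>length ls = k\<close> assms(5) by (simp add: card_distinct)
  ultimately show False
    using assms(6) \<open>distinct ix\<close> by (simp add: arrangements_def)
qed

lemma basic_form_lie_frame_permute_list:
  assumes "distinct e1" "set e1 \<subseteq> {..<n}" "length e1 = k" "length e2 = k"
    "\<pi> permutes {..<k}" "\<rho> permutes {..<k}"
  shows "basic_form n s (lie_frame n (permute_list \<pi> e1) (permute_list \<rho> e2))
    = of_int (sign \<pi>) * of_int (sign \<rho>) * basic_form n s (lie_frame n e1 e2)"
proof -
  obtain \<theta> where \<theta>: "\<theta> permutes set e1" "sign \<theta> = sign \<rho> * sign \<pi>"
    "lie_frame n (permute_list \<pi> e1) (permute_list \<rho> e2) = lie_frame n e1 e2 \<circ> \<theta>"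
    using lie_frame_permute_list[OF assms(1,3,4,5,6)] by blast
  have "\<theta> permutes {0..<n}"
    using \<theta>(1) by (rule permutes_subset) (use assms(2) in auto)
  then show ?thesis
    using \<theta>(2,3) by (simp add: basic_form_compose)
qed

lemma Q_tau_basic_form_eq:
  assumes "distinct s" "length s = n" "set s \<subseteq> {..<2 * n}" "card {c. n + c \<in> set s} = k"
  defines "I \<equiv> {..<n} - set s" and "Y \<equiv> {c. n + c \<in> set s}"
  shows "Q_tau n k (basic_form n s) W
    = basic_form n s (lie_frame n (sorted_list_of_set I) (sorted_list_of_set Y)) * minor k W I * minor k W Y"
proof -
  let ?e1 = "sorted_list_of_set I" and ?e2 = "sorted_list_of_set Y"
  let ?P = "{\<pi>. \<pi> permutes {..<k}}" and ?C = "basic_form n s (lie_frame n ?e1 ?e2)"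
  define F where "F ix ls = lie_weight W ix ls * basic_form n s (lie_frame n ix ls)" for ix ls
  have I: "finite I" "card I = k" "I \<subseteq> {..<n}"
    using card_missing_x_eq_card_y_part[OF assms(1-3)] assms(4) by (auto simp: I_def Y_def)
  have "Y \<subseteq> {..<n}"
    using assms(3) by (auto simp: Y_def)
  then have Y: "finite Y" "card Y = k" "Y \<subseteq> {..<n}"
    using assms(4) finite_subset by (auto simp: Y_def)
  have "Q_tau n k (basic_form n s) W = (\<Sum>(ix, ls)\<in>distinct_words n k \<times> words n k. F ix ls)"
    by (simp add: Q_tau_expansion F_def sum.cartesian_product)
  also have "\<dots> = (\<Sum>(ix, ls)\<in>arrangements I \<times> arrangements Y. F ix ls)"
  proof (rule sum.mono_neutral_right)
    show "arrangements I \<times> arrangements Y \<subseteq> distinct_words n k \<times> words n k"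
      using I Y by (auto simp: arrangements_def distinct_words_def words_def distinct_card)
    show "\<forall>x\<in>distinct_words n k \<times> words n k - arrangements I \<times> arrangements Y. (case x of (ix, ls) \<Rightarrow> F ix ls) = 0"
      using basic_form_lie_frame_eq_0[OF _ _ assms(2,3,4)] by (fastforce simp: F_def I_def Y_def)
  qed (simp add: finite_distinct_words finite_words)
  also have "\<dots> = (\<Sum>(\<pi>, \<rho>)\<in>?P \<times> ?P. F (permute_list \<pi> ?e1) (permute_list \<rho> ?e2))"
    using sum.reindex_bij_betw[OF bij_betw_map_prod[OF bij_betw_permute_list_arrangements[OF I(1,2)]
          bij_betw_permute_list_arrangements[OF Y(1,2)]], of "\<lambda>(ix, ls). F ix ls"]
    by (simp add: case_prod_beta)
  also have "\<dots> = (\<Sum>(\<pi>, \<rho>)\<in>?P \<times> ?P. ?C * ((of_int (sign \<pi>) * (\<Prod>j<k. W j (?e1 ! \<pi> j))) *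
      (of_int (sign \<rho>) * (\<Prod>j<k. W j (?e2 ! \<rho> j)))))"
    using I Y basic_form_lie_frame_permute_list[of ?e1 n k ?e2]
    by (intro sum.cong refl) (auto simp: F_def lie_weight_def permute_list_nth prod.distrib mult_ac)
  also have "\<dots> = ?C * minor k W I * minor k W Y"
    by (simp add: minor_eq_sum_permute_rows sum.cartesian_product[symmetric] sum_distrib_left
        sum_distrib_right mult_ac)
  finally show ?thesis .
qed

lemma Q_tau_basic_form:
  assumes "distinct s" "length s = n" "set s \<subseteq> {..<2 * n}" "card {c. n + c \<in> set s} = k"
  obtains C where "C \<noteq> 0"
    "\<And>W. Q_tau n k (basic_form n s) W = C * minor k W ({..<n} - set s) * minor k W {c. n + c \<in> set s}"
proof
  let ?e1 = "sorted_list_of_set ({..<n} - set s)" and ?e2 = "sorted_list_of_set {c. n + c \<in> set s}"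
  have "{c. n + c \<in> set s} \<subseteq> {..<n}"
    using assms(3) by auto
  then have fin: "finite {c. n + c \<in> set s}"
    using finite_subset by auto
  then have e: "?e1 \<in> distinct_words n k" "?e2 \<in> words n k"
    using card_missing_x_eq_card_y_part[OF assms(1-3)] assms(3,4) by (auto simp: distinct_words_def words_def)
  have "lie_frame n ?e1 ?e2 ` {..<n} = set s"
    using lie_frame_image[OF e] set_eq_x_part_Un_y_part[OF assms(3)] fin by simp
  moreover from this have "inj_on (lie_frame n ?e1 ?e2) {..<n}"
    using assms(1,2) by (simp add: eq_card_imp_inj_on distinct_card)
  ultimately show "basic_form n s (lie_frame n ?e1 ?e2) \<noteq> 0"
    using assms(1,2) by (intro basic_form_neq_0)
qed (rule Q_tau_basic_form_eq[OF assms])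

section \<open>Q annihilates multiples of the symplectic form\<close>

lemma sum_involution_eq_0:
  fixes T :: "'a \<Rightarrow> 'b::field_char_0"
  assumes "finite S" "\<And>x. x \<in> S \<Longrightarrow> \<phi> x \<in> S" "\<And>x. x \<in> S \<Longrightarrow> \<phi> (\<phi> x) = x"
    "\<And>x. x \<in> S \<Longrightarrow> T (\<phi> x) = - T x"
  shows "(\<Sum>x\<in>S. T x) = 0"
proof -
  have "bij_betw \<phi> S S"
    by (rule bij_betw_byWitness[where f'=\<phi>]) (use assms in auto)
  then have "(\<Sum>x\<in>S. T x) = (\<Sum>x\<in>S. T (\<phi> x))"
    by (simp add: sum.reindex_bij_betw)
  also have "\<dots> = - (\<Sum>x\<in>S. T x)"
    using assms(4) by (simp add: sum_negf)
  finally show ?thesis by simp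
qed

lemma lie_frame_list_update:
  assumes "distinct ix" "length ls = length ix" "j < length ix" "ix ! j = u" "v \<notin> set ix"
  shows "lie_frame n (ix[j := v]) (ls[j := w]) b
       = (if b = v then n + w else if b = u then u else lie_frame n ix ls b)"
proof -
  have u: "u \<in> set ix" "u \<noteq> v" using assms by auto
  have set': "set (ix[j := v]) = insert v (set ix - {u})"
    using set_update_distinct[OF assms(1,3)] assms(4) by simp
  have distinct': "distinct (ix[j := v])"
    using assms by (intro distinct_list_update) auto
  have v: "index_of (ix[j := v]) v = j"
    using index_of_nth[OF distinct', of j] assms by simp
  have other: "index_of (ix[j := v]) b = index_of ix b" "index_of ix b \<noteq> j"
    if "b \<in> set ix" "b \<noteq> u" for b
  proof -
    have i: "index_of ix b < length ix" "ix ! index_of ix b = b"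
      using index_of_in[OF assms(1) that(1)] by auto
    then show "index_of ix b \<noteq> j"
      using that(2) assms(4) by auto
    with i show "index_of (ix[j := v]) b = index_of ix b"
      using index_of_nth[OF distinct', of "index_of ix b"] by simp
  qed
  consider "b = v" | "b \<noteq> v" "b \<in> set ix" "b \<noteq> u" | "b \<noteq> v" "b \<notin> set ix - {u}"
    by blast
  then show ?thesis
  proof cases
    case 1
    then show ?thesis using v set' assms(2,3) by (simp add: lie_frame_def)
  next
    case 2
    then show ?thesis using other[OF 2(2,3)] set' by (simp add: lie_frame_def)
  next
    case 3
    then have "b \<notin> set (ix[j := v])" using set' by blast
    then show ?thesis using 3 by (simp add: lie_frame_notin) (simp add: lie_frame_def)
  qed
qed

type_synonym omega_index = "nat list \<times> nat list \<times> nat \<times> (nat \<Rightarrow> nat)"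

definition omega_indices :: "nat \<Rightarrow> nat \<Rightarrow> omega_index set" where
  "omega_indices n k = distinct_words n k \<times> words n k \<times> {..<n} \<times> {\<sigma>. \<sigma> permutes {0..<n}}"

definition omega_term :: "nat \<Rightarrow> (nat \<Rightarrow> nat \<Rightarrow> complex) \<Rightarrow> nat list \<Rightarrow> omega_index \<Rightarrow> complex" where
  "omega_term n W s0 = (\<lambda>(ix, ls, p, \<sigma>). lie_weight W ix ls * (of_int (sign \<sigma>) *
      (\<Prod>a<n. if lie_frame n ix ls (\<sigma> a) = (p # (n + p) # s0) ! a then 1 else 0)))"

definition omega_matched :: "nat \<Rightarrow> omega_index \<Rightarrow> bool" where
  "omega_matched n = (\<lambda>(ix, ls, p, \<sigma>). lie_frame n ix ls (\<sigma> 0) = p \<and> lie_frame n ix ls (\<sigma> 1) = n + p)"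

text \<open>In a matched term the vectors paired with dx_p and dy_p are the untouched e_{x_p} and the
  image e_{y_p} of e_{x_q}, q = \<sigma> 1, under the j-th Lie step. Letting that step send x_p to y_q
  instead gives a term of the summand dx_q \<and> dy_q with the same weight w_q w_p, but with \<sigma>
  composed with a transposition.\<close>
definition omega_swap :: "nat \<Rightarrow> omega_index \<Rightarrow> omega_index" where
  "omega_swap n x = (if omega_matched n x then (case x of (ix, ls, p, \<sigma>) \<Rightarrow>
      let j = index_of ix (\<sigma> 1) in (ix[j := \<sigma> 0], ls[j := \<sigma> 1], \<sigma> 1, \<sigma> \<circ> Transposition.transpose 0 1))
    else x)"

lemma omega_term_unmatched:
  assumes "2 \<le> n" "\<not> omega_matched n x"
  shows "omega_term n W s0 x = 0"
proof -
  obtain ix ls p \<sigma> where x: "x = (ix, ls, p, \<sigma>)" by (cases x) auto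
  have "(\<Prod>a<n. if lie_frame n ix ls (\<sigma> a) = (p # (n + p) # s0) ! a then 1 else (0::complex)) = 0"
  proof (cases "lie_frame n ix ls (\<sigma> 0) = p")
    case True
    then have "lie_frame n ix ls (\<sigma> 1) \<noteq> n + p" using assms(2) x by (simp add: omega_matched_def)
    then show ?thesis using assms(1) by (intro prod_zero bexI[of _ 1]) auto
  next
    case False
    then show ?thesis using assms(1) by (intro prod_zero bexI[of _ 0]) auto
  qed
  then show ?thesis by (simp add: omega_term_def x)
qed

lemma omega_matched_facts:
  assumes "(ix, ls, p, \<sigma>) \<in> omega_indices n k" "2 \<le> n" "omega_matched n (ix, ls, p, \<sigma>)"
  shows "\<sigma> 0 = p" "\<sigma> 0 \<notin> set ix" "\<sigma> 1 \<in> set ix" "\<sigma> 1 < n" "\<sigma> 0 \<noteq> \<sigma> 1"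
    "ls ! index_of ix (\<sigma> 1) = p"
proof -
  have \<sigma>: "\<sigma> permutes {0..<n}" "p < n" using assms(1) by (auto simp: omega_indices_def)
  have frame: "lie_frame n ix ls (\<sigma> 0) = p" "lie_frame n ix ls (\<sigma> 1) = n + p"
    using assms(3) by (auto simp: omega_matched_def)
  have "\<sigma> 0 < n" "\<sigma> 1 < n" using assms(2) permutes_in_image[OF \<sigma>(1)] by auto
  then show "\<sigma> 1 < n" "\<sigma> 0 \<notin> set ix" "\<sigma> 1 \<in> set ix"
    using frame \<sigma>(2) lie_frame_in[of _ ix n ls] lie_frame_notin[of _ ix n ls] by force+
  then show "\<sigma> 0 = p" "ls ! index_of ix (\<sigma> 1) = p"
    using frame by (simp_all add: lie_frame_def)
  show "\<sigma> 0 \<noteq> \<sigma> 1" using permutes_inj[OF \<sigma>(1)] by (metis inj_eq zero_neq_one)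
qed

lemma omega_swap_matched:
  assumes x: "x = (ix, ls, p, \<sigma>)" "x \<in> omega_indices n k" and n: "2 \<le> n" and m: "omega_matched n x"
  defines "j \<equiv> index_of ix (\<sigma> 1)"
  shows "omega_swap n x = (ix[j := \<sigma> 0], ls[j := \<sigma> 1], \<sigma> 1, \<sigma> \<circ> Transposition.transpose 0 1)"
    and "lie_frame n (ix[j := \<sigma> 0]) (ls[j := \<sigma> 1])
      = (\<lambda>b. if b = \<sigma> 0 then n + \<sigma> 1 else if b = \<sigma> 1 then \<sigma> 1 else lie_frame n ix ls b)"
proof -
  note facts = omega_matched_facts[OF x(2)[unfolded x] n m[unfolded x]]
  have "distinct ix" "length ls = length ix" using x by (auto simp: omega_indices_def distinct_words_def words_def)
  then show "lie_frame n (ix[j := \<sigma> 0]) (ls[j := \<sigma> 1])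
      = (\<lambda>b. if b = \<sigma> 0 then n + \<sigma> 1 else if b = \<sigma> 1 then \<sigma> 1 else lie_frame n ix ls b)"
    using facts index_of_in[of ix "\<sigma> 1"] unfolding j_def by (intro ext lie_frame_list_update) auto
  show "omega_swap n x = (ix[j := \<sigma> 0], ls[j := \<sigma> 1], \<sigma> 1, \<sigma> \<circ> Transposition.transpose 0 1)"
    using m by (simp add: omega_swap_def x j_def Let_def)
qed

lemma omega_swap_involution:
  assumes x: "x \<in> omega_indices n k" and n: "2 \<le> n" and m: "omega_matched n x"
  shows "omega_swap n x \<in> omega_indices n k" "omega_matched n (omega_swap n x)"
    "omega_swap n (omega_swap n x) = x"
proof -
  obtain ix ls p \<sigma> where x_eq: "x = (ix, ls, p, \<sigma>)" by (cases x) auto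
  define j where "j = index_of ix (\<sigma> 1)"
  define \<sigma>' where "\<sigma>' = \<sigma> \<circ> Transposition.transpose 0 1"
  note facts = omega_matched_facts[OF x[unfolded x_eq] n m[unfolded x_eq]]
  note swap = omega_swap_matched[OF x_eq x n m, folded j_def \<sigma>'_def]
  have ix: "distinct ix" "set ix \<subseteq> {..<n}" "length ls = length ix" "set ls \<subseteq> {..<n}" "\<sigma> permutes {0..<n}"
    using x x_eq by (auto simp: omega_indices_def distinct_words_def words_def)
  have j: "j < length ix" "ix ! j = \<sigma> 1" using index_of_in[OF ix(1) facts(3)] by (auto simp: j_def)
  have "Transposition.transpose 0 1 permutes {0..<n}"
    using n by (intro permutes_swap_id) auto
  then have \<sigma>': "\<sigma>' 0 = \<sigma> 1" "\<sigma>' 1 = \<sigma> 0" "\<sigma>' permutes {0..<n}"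
    using ix(5) by (auto simp: \<sigma>'_def intro: permutes_compose)
  have "distinct (ix[j := \<sigma> 0])" using ix(1) facts(2) by (intro distinct_list_update) auto
  moreover have "p < n" using x x_eq by (simp add: omega_indices_def)
  then have "set (ix[j := \<sigma> 0]) \<subseteq> {..<n}" "set (ls[j := \<sigma> 1]) \<subseteq> {..<n}"
    using set_update_subset_insert[of ix j "\<sigma> 0"] set_update_subset_insert[of ls j "\<sigma> 1"] ix facts
    by auto
  ultimately show in_dom: "omega_swap n x \<in> omega_indices n k"
    using x x_eq swap(1) \<sigma>' facts by (auto simp: omega_indices_def distinct_words_def words_def)
  show matched: "omega_matched n (omega_swap n x)"
    using swap \<sigma>' facts by (simp add: omega_matched_def)
  have "index_of (ix[j := \<sigma> 0]) (\<sigma>' 1) = j"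
    using index_of_nth[OF \<open>distinct (ix[j := \<sigma> 0])\<close>, of j] j \<sigma>' by simp
  moreover have "(ix[j := \<sigma> 0])[j := \<sigma> 1] = ix" "(ls[j := \<sigma> 1])[j := \<sigma> 0] = ls"
    using j facts(1,6) list_update_id[of ix j] list_update_id[of ls j] by (simp_all add: j_def)
  moreover have "\<sigma>' \<circ> Transposition.transpose 0 1 = \<sigma>"
    by (simp add: \<sigma>'_def o_assoc[symmetric])
  ultimately show "omega_swap n (omega_swap n x) = x"
    using omega_swap_matched[OF _ in_dom n matched] swap(1) \<sigma>' facts x_eq by simp
qed

lemma omega_term_swap:
  assumes x: "x \<in> omega_indices n k" and n: "2 \<le> n" and m: "omega_matched n x"
  shows "omega_term n W s0 (omega_swap n x) = - omega_term n W s0 x"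
proof -
  obtain ix ls p \<sigma> where x_eq: "x = (ix, ls, p, \<sigma>)" by (cases x) auto
  define j where "j = index_of ix (\<sigma> 1)"
  define \<sigma>' where "\<sigma>' = \<sigma> \<circ> Transposition.transpose 0 1"
  note facts = omega_matched_facts[OF x[unfolded x_eq] n m[unfolded x_eq]]
  note swap = omega_swap_matched[OF x_eq x n m, folded j_def \<sigma>'_def]
  have ix: "distinct ix" "\<sigma> permutes {0..<n}" "length ls = length ix"
    using x x_eq by (auto simp: omega_indices_def distinct_words_def words_def)
  have j: "j < length ix" "ix ! j = \<sigma> 1" "ls ! j = \<sigma> 0"
    using index_of_in[OF ix(1) facts(3)] facts(1,6) by (auto simp: j_def)
  have "W i (ix[j := \<sigma> 0] ! i) * W i (ls[j := \<sigma> 1] ! i) = W i (ix ! i) * W i (ls ! i)"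
    if "i < length ix" for i
    using that j ix(3) by (cases "i = j") (simp_all add: mult.commute)
  then have "lie_weight W (ix[j := \<sigma> 0]) (ls[j := \<sigma> 1]) = lie_weight W ix ls"
    unfolding lie_weight_def by simp
  moreover have "sign \<sigma>' = - sign \<sigma>"
    using permutes_imp_permutation[OF finite_atLeastLessThan ix(2)]
    by (simp add: \<sigma>'_def sign_compose permutation_swap_id sign_swap_id)
  moreover have "(if lie_frame n (ix[j := \<sigma> 0]) (ls[j := \<sigma> 1]) (\<sigma>' a) = (\<sigma> 1 # (n + \<sigma> 1) # s0) ! a
        then 1 else (0::complex))
      = (if lie_frame n ix ls (\<sigma> a) = (p # (n + p) # s0) ! a then 1 else 0)" for a
  proof (cases "a = 0 \<or> a = 1")
    case True
    then show ?thesis using swap(2) facts m x_eq by (auto simp: \<sigma>'_def omega_matched_def)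
  next
    case False
    then have "\<sigma>' a = \<sigma> a" "\<sigma> a \<noteq> \<sigma> 0" "\<sigma> a \<noteq> \<sigma> 1"
      using permutes_inj[OF ix(2)] by (auto simp: \<sigma>'_def dest: injD)
    moreover have "(\<sigma> 1 # (n + \<sigma> 1) # s0) ! a = (p # (n + p) # s0) ! a"
      using False by (cases a; cases "a - 1") auto
    ultimately show ?thesis using swap(2) by simp
  qed
  ultimately show ?thesis
    unfolding swap(1) by (simp add: omega_term_def x_eq)
qed

lemma Q_tau_omega_wedge_eq_0:
  assumes "2 \<le> n"
  shows "Q_tau n k (\<lambda>g. \<Sum>p<n. basic_form n (p # (n + p) # s0) g) W = 0"
proof -
  have "Q_tau n k (\<lambda>g. \<Sum>p<n. basic_form n (p # (n + p) # s0) g) W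
      = (\<Sum>x\<in>omega_indices n k. omega_term n W s0 x)"
    unfolding Q_tau_expansion basic_form_def omega_term_def omega_indices_def
    by (simp add: sum.cartesian_product[symmetric] sum_distrib_left atLeast0LessThan)
  also have "\<dots> = 0"
  proof (rule sum_involution_eq_0[where \<phi> = "omega_swap n"])
    show "finite (omega_indices n k)"
      by (simp add: omega_indices_def finite_distinct_words finite_words finite_permutations)
    fix x assume x: "x \<in> omega_indices n k"
    show "omega_swap n x \<in> omega_indices n k" "omega_swap n (omega_swap n x) = x"
      using omega_swap_involution[OF x assms] x by (cases "omega_matched n x"; simp add: omega_swap_def)+
    show "omega_term n W s0 (omega_swap n x) = - omega_term n W s0 x"
      using omega_term_swap[OF x assms] omega_term_unmatched[OF assms]
      by (cases "omega_matched n x") (simp_all add: omega_swap_def)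
  qed
  finally show ?thesis .
qed

section \<open>Lefschetz decomposition of coefficient functions\<close>

type_synonym coeffs = "nat set \<times> nat set \<Rightarrow> complex"

definition index_pairs :: "nat \<Rightarrow> (nat set \<times> nat set) set" where
  "index_pairs n = Pow {..<n} \<times> Pow {..<n}"

text \<open>c (A, B) stands for the coefficient of basic_form n (interleaved n A B), i.e. of
  dx_A \<and> dy_B; omega_raise n is wedging with \<omega>_s and omega_lower n is its adjoint.\<close>
definition omega_raise :: "nat \<Rightarrow> coeffs \<Rightarrow> coeffs" where
  "omega_raise n c = (\<lambda>(A, B). if A \<subseteq> {..<n} \<and> B \<subseteq> {..<n}
     then \<Sum>i\<in>A \<inter> B. c (A - {i}, B - {i}) else 0)"

definition omega_lower :: "nat \<Rightarrow> coeffs \<Rightarrow> coeffs" where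
  "omega_lower n c = (\<lambda>(A, B). if A \<subseteq> {..<n} \<and> B \<subseteq> {..<n}
     then \<Sum>i\<in>{..<n} - (A \<union> B). c (insert i A, insert i B) else 0)"

definition bidegree :: "nat \<Rightarrow> int \<Rightarrow> int \<Rightarrow> coeffs \<Rightarrow> bool" where
  "bidegree n a b c \<longleftrightarrow> (\<forall>A B. c (A, B) \<noteq> 0 \<longrightarrow>
     A \<subseteq> {..<n} \<and> B \<subseteq> {..<n} \<and> int (card A) = a \<and> int (card B) = b)"

lemma finite_index_pairs: "finite (index_pairs n)"
  by (simp add: index_pairs_def)

lemma omega_raise_sum:
  "omega_raise n (\<lambda>x. \<Sum>r\<in>R. a r * f r x) = (\<lambda>x. \<Sum>r\<in>R. a r * omega_raise n (f r) x)"
proof (rule ext, clarify)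
  fix A B
  show "omega_raise n (\<lambda>x. \<Sum>r\<in>R. a r * f r x) (A, B) = (\<Sum>r\<in>R. a r * omega_raise n (f r) (A, B))"
    by (cases "A \<subseteq> {..<n}"; cases "B \<subseteq> {..<n}") (simp_all add: omega_raise_def sum_distrib_left sum.swap[of _ R])
qed

lemma omega_lower_sum:
  "omega_lower n (\<lambda>x. \<Sum>r\<in>R. a r * f r x) = (\<lambda>x. \<Sum>r\<in>R. a r * omega_lower n (f r) x)"
proof (rule ext, clarify)
  fix A B
  show "omega_lower n (\<lambda>x. \<Sum>r\<in>R. a r * f r x) (A, B) = (\<Sum>r\<in>R. a r * omega_lower n (f r) (A, B))"
    by (cases "A \<subseteq> {..<n}"; cases "B \<subseteq> {..<n}") (simp_all add: omega_lower_def sum_distrib_left sum.swap[of _ R])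
qed

lemma omega_raise_add_scale:
  "omega_raise n (\<lambda>x. f x + a * g x) = (\<lambda>x. omega_raise n f x + a * omega_raise n g x)"
  by (auto simp: omega_raise_def fun_eq_iff sum.distrib sum_distrib_left)

lemma omega_raise_pow_zero: "(omega_raise n ^^ r) (\<lambda>x. 0) = (\<lambda>x. 0)"
  by (induction r) (auto simp: omega_raise_def fun_eq_iff)

lemma bidegree_raise:
  assumes "bidegree n a b c"
  shows "bidegree n (a + 1) (b + 1) (omega_raise n c)"
  unfolding bidegree_def
proof (intro allI impI)
  fix A B assume nz: "omega_raise n c (A, B) \<noteq> 0"
  then have sub: "A \<subseteq> {..<n}" "B \<subseteq> {..<n}" by (auto simp: omega_raise_def split: if_splits)
  then have fin: "finite A" "finite B" using finite_subset by auto
  from nz sub have "(\<Sum>i\<in>A \<inter> B. c (A - {i}, B - {i})) \<noteq> 0"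
    by (simp add: omega_raise_def)
  then obtain i where i: "i \<in> A \<inter> B" "c (A - {i}, B - {i}) \<noteq> 0"
    by (rule sum.not_neutral_contains_not_neutral)
  then have "int (card (A - {i})) = a" "int (card (B - {i})) = b"
    using assms unfolding bidegree_def by blast+
  moreover have "card (A - {i}) + 1 = card A" "card (B - {i}) + 1 = card B"
    using i fin card_Suc_Diff1[of A i] card_Suc_Diff1[of B i] by auto
  ultimately show "A \<subseteq> {..<n} \<and> B \<subseteq> {..<n} \<and> int (card A) = a + 1 \<and> int (card B) = b + 1"
    using sub by linarith
qed

lemma bidegree_lower:
  assumes "bidegree n a b c"
  shows "bidegree n (a - 1) (b - 1) (omega_lower n c)"
  unfolding bidegree_def
proof (intro allI impI)
  fix A B assume nz: "omega_lower n c (A, B) \<noteq> 0"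
  then have sub: "A \<subseteq> {..<n}" "B \<subseteq> {..<n}" by (auto simp: omega_lower_def split: if_splits)
  then have fin: "finite A" "finite B" using finite_subset by auto
  from nz sub have "(\<Sum>i\<in>{..<n} - (A \<union> B). c (insert i A, insert i B)) \<noteq> 0"
    by (simp add: omega_lower_def)
  then obtain i where i: "i \<in> {..<n} - (A \<union> B)" "c (insert i A, insert i B) \<noteq> 0"
    by (rule sum.not_neutral_contains_not_neutral)
  then have "int (card (insert i A)) = a" "int (card (insert i B)) = b"
    using assms unfolding bidegree_def by blast+
  moreover have "card (insert i A) = card A + 1" "card (insert i B) = card B + 1"
    using i fin by auto
  ultimately show "A \<subseteq> {..<n} \<and> B \<subseteq> {..<n} \<and> int (card A) = a - 1 \<and> int (card B) = b - 1"
    using sub by linarith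
qed

lemma bidegree_raise_pow: "bidegree n a b c \<Longrightarrow> bidegree n (a + int r) (b + int r) ((omega_raise n ^^ r) c)"
proof (induction r)
  case (Suc r)
  then show ?case using bidegree_raise[of n "a + int r" "b + int r"] by (simp add: algebra_simps)
qed simp

lemma bidegree_lower_pow: "bidegree n a b c \<Longrightarrow> bidegree n (a - int r) (b - int r) ((omega_lower n ^^ r) c)"
proof (induction r)
  case (Suc r)
  then show ?case using bidegree_lower[of n "a - int r" "b - int r"] by (simp add: algebra_simps)
qed simp

lemma bidegree_negative_eq_0: "bidegree n a b c \<Longrightarrow> a < 0 \<or> b < 0 \<Longrightarrow> c = (\<lambda>x. 0)"
  unfolding bidegree_def fun_eq_iff by (metis of_nat_0_le_iff not_less surj_pair)

lemma bidegree_sum: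
  assumes "\<And>r. r \<in> R \<Longrightarrow> bidegree n a b (f r)"
  shows "bidegree n a b (\<lambda>x. \<Sum>r\<in>R. g r * f r x)"
  unfolding bidegree_def
proof (intro allI impI)
  fix A B assume "(\<Sum>r\<in>R. g r * f r (A, B)) \<noteq> 0"
  then obtain r where "r \<in> R" "f r (A, B) \<noteq> 0"
    by (metis (mono_tags, lifting) mult_zero_right sum.neutral)
  then show "A \<subseteq> {..<n} \<and> B \<subseteq> {..<n} \<and> int (card A) = a \<and> int (card B) = b"
    using assms unfolding bidegree_def by blast
qed

lemma omega_lower_raise:
  assumes "A \<subseteq> {..<n}" "B \<subseteq> {..<n}"
  shows "omega_lower n (omega_raise n c) (A, B) = of_nat (card ({..<n} - (A \<union> B))) * c (A, B)
    + (\<Sum>i\<in>{..<n} - (A \<union> B). \<Sum>j\<in>A \<inter> B. c (insert i A - {j}, insert i B - {j}))"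
proof -
  have fin: "finite (A \<inter> B)" using assms(1) finite_subset[of "A \<inter> B" "{..<n}"] by auto
  have "omega_lower n (omega_raise n c) (A, B)
      = (\<Sum>i\<in>{..<n} - (A \<union> B). \<Sum>j\<in>insert i (A \<inter> B). c (insert i A - {j}, insert i B - {j}))"
    using assms by (auto simp: omega_lower_def omega_raise_def intro!: sum.cong)
  also have "\<dots> = (\<Sum>i\<in>{..<n} - (A \<union> B). c (A, B)
      + (\<Sum>j\<in>A \<inter> B. c (insert i A - {j}, insert i B - {j})))"
    using fin by (intro sum.cong refl) (auto simp: insert_Diff_if)
  finally show ?thesis by (simp add: sum.distrib)
qed

lemma omega_raise_lower:
  assumes "A \<subseteq> {..<n}" "B \<subseteq> {..<n}"
  shows "omega_raise n (omega_lower n c) (A, B) = of_nat (card (A \<inter> B)) * c (A, B)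
    + (\<Sum>i\<in>{..<n} - (A \<union> B). \<Sum>j\<in>A \<inter> B. c (insert i A - {j}, insert i B - {j}))"
proof -
  have "{..<n} - (A - {j} \<union> (B - {j})) = insert j ({..<n} - (A \<union> B))" if "j \<in> A \<inter> B" for j
    using that assms by auto
  then have "omega_raise n (omega_lower n c) (A, B)
      = (\<Sum>j\<in>A \<inter> B. \<Sum>i\<in>insert j ({..<n} - (A \<union> B)). c (insert i (A - {j}), insert i (B - {j})))"
    using assms by (auto simp: omega_lower_def omega_raise_def intro!: sum.cong)
  also have "\<dots> = (\<Sum>j\<in>A \<inter> B. c (A, B)
      + (\<Sum>i\<in>{..<n} - (A \<union> B). c (insert i A - {j}, insert i B - {j})))"
  proof (rule sum.cong[OF refl])
    fix j assume j: "j \<in> A \<inter> B"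
    then have "insert j (A - {j}) = A" "insert j (B - {j}) = B" "j \<notin> {..<n} - (A \<union> B)"
      by auto
    moreover have "insert i (A - {j}) = insert i A - {j}" "insert i (B - {j}) = insert i B - {j}"
      if "i \<in> {..<n} - (A \<union> B)" for i
      using that j by auto
    ultimately show "(\<Sum>i\<in>insert j ({..<n} - (A \<union> B)). c (insert i (A - {j}), insert i (B - {j})))
      = c (A, B) + (\<Sum>i\<in>{..<n} - (A \<union> B). c (insert i A - {j}, insert i B - {j}))"
      by simp
  qed
  finally show ?thesis by (simp add: sum.distrib sum.swap[of _ "A \<inter> B"])
qed

lemma omega_commutator:
  assumes "bidegree n a b c"
  shows "omega_lower n (omega_raise n c) x = omega_raise n (omega_lower n c) x + of_int (int n - a - b) * c x"
proof -
  obtain A B where x: "x = (A, B)" by (cases x)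
  show ?thesis
  proof (cases "A \<subseteq> {..<n} \<and> B \<subseteq> {..<n}")
    case False
    then have "c x = 0" using assms x unfolding bidegree_def by blast
    then show ?thesis using False x by (auto simp: omega_lower_def omega_raise_def)
  next
    case True
    then have fin: "finite A" "finite B" using finite_subset by auto
    have "of_nat (card ({..<n} - (A \<union> B))) * c (A, B)
        = of_nat (card (A \<inter> B)) * c (A, B) + of_int (int n - a - b) * c (A, B)"
    proof (cases "c (A, B) = 0")
      case False
      then have "int (card A) = a" "int (card B) = b" using assms unfolding bidegree_def by blast+
      moreover have "card ({..<n} - (A \<union> B)) = n - card (A \<union> B)"
        using True by (simp add: card_Diff_subset fin)
      moreover have "card (A \<union> B) + card (A \<inter> B) = card A + card B"
        using card_Un_Int fin by metis
      moreover have "card (A \<union> B) \<le> n"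
        using True card_mono[of "{..<n}" "A \<union> B"] by auto
      ultimately have "int (card ({..<n} - (A \<union> B))) = int (card (A \<inter> B)) + (int n - a - b)"
        by linarith
      then show ?thesis by (metis distrib_right of_int_add of_int_of_nat_eq)
    qed simp
    then show ?thesis
      using True x by (simp add: omega_lower_raise omega_raise_lower)
  qed
qed

lemma omega_commutator_pow:
  assumes "bidegree n a b v"
  shows "omega_lower n ((omega_raise n ^^ r) v) x = (omega_raise n ^^ r) (omega_lower n v) x
      + of_int (int r * (int n - a - b - int r + 1)) * (omega_raise n ^^ (r - 1)) v x"
proof (induction r arbitrary: x)
  case (Suc r)
  have "omega_lower n ((omega_raise n ^^ Suc r) v) x
      = omega_raise n (omega_lower n ((omega_raise n ^^ r) v)) x
        + of_int (int n - (a + int r) - (b + int r)) * (omega_raise n ^^ r) v x"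
    using omega_commutator[OF bidegree_raise_pow[OF assms]] by simp
  also have "omega_lower n ((omega_raise n ^^ r) v) = (\<lambda>x. (omega_raise n ^^ r) (omega_lower n v) x
      + of_int (int r * (int n - a - b - int r + 1)) * (omega_raise n ^^ (r - 1)) v x)"
    using Suc.IH by (simp add: fun_eq_iff)
  also have "omega_raise n \<dots> x = (omega_raise n ^^ Suc r) (omega_lower n v) x
      + of_int (int r * (int n - a - b - int r + 1)) * (omega_raise n ^^ r) v x"
    by (cases r) (simp_all add: omega_raise_add_scale)
  finally show ?case by (simp add: algebra_simps)
qed simp

lemma sum_index_pairs_insert:
  "(\<Sum>(A, B)\<in>index_pairs n. \<Sum>i\<in>A \<inter> B. F A B i)
 = (\<Sum>(A, B)\<in>index_pairs n. \<Sum>i\<in>{..<n} - (A \<union> B). F (insert i A) (insert i B) i)"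
proof -
  have fin: "\<forall>x\<in>index_pairs n. finite (fst x \<inter> snd x)" "\<forall>x\<in>index_pairs n. finite ({..<n} - (fst x \<union> snd x))"
    using finite_subset[of _ "{..<n}"] by (auto simp: index_pairs_def)
  have "(\<Sum>(A, B)\<in>index_pairs n. \<Sum>i\<in>A \<inter> B. F A B i)
      = (\<Sum>p\<in>(SIGMA x:index_pairs n. fst x \<inter> snd x). F (fst (fst p)) (snd (fst p)) (snd p))"
    using sum.Sigma[OF finite_index_pairs fin(1), of "\<lambda>x i. F (fst x) (snd x) i"] by (simp add: split_def)
  also have "\<dots> = (\<Sum>p\<in>(SIGMA x:index_pairs n. {..<n} - (fst x \<union> snd x)).
      F (insert (snd p) (fst (fst p))) (insert (snd p) (snd (fst p))) (snd p))"
    by (rule sum.reindex_bij_witness[where j = "\<lambda>((A, B), i). ((A - {i}, B - {i}), i)"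
          and i = "\<lambda>((A, B), i). ((insert i A, insert i B), i)"])
       (auto simp: index_pairs_def insert_absorb)
  also have "\<dots> = (\<Sum>(A, B)\<in>index_pairs n. \<Sum>i\<in>{..<n} - (A \<union> B). F (insert i A) (insert i B) i)"
    using sum.Sigma[OF finite_index_pairs fin(2), of "\<lambda>x i. F (insert i (fst x)) (insert i (snd x)) i"]
    by (simp add: split_def)
  finally show ?thesis .
qed

definition coeff_inner :: "nat \<Rightarrow> coeffs \<Rightarrow> coeffs \<Rightarrow> complex" where
  "coeff_inner n x y = (\<Sum>z\<in>index_pairs n. x z * cnj (y z))"

lemma omega_raise_adjoint: "coeff_inner n (omega_raise n x) y = coeff_inner n x (omega_lower n y)"
proof -
  have "coeff_inner n (omega_raise n x) y
      = (\<Sum>(A, B)\<in>index_pairs n. \<Sum>i\<in>A \<inter> B. x (A - {i}, B - {i}) * cnj (y (A, B)))"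
    unfolding coeff_inner_def
    by (intro sum.cong refl) (auto simp: omega_raise_def index_pairs_def sum_distrib_right)
  also have "\<dots> = (\<Sum>(A, B)\<in>index_pairs n. \<Sum>i\<in>{..<n} - (A \<union> B).
      x (insert i A - {i}, insert i B - {i}) * cnj (y (insert i A, insert i B)))"
    by (rule sum_index_pairs_insert)
  also have "\<dots> = coeff_inner n x (omega_lower n y)"
    unfolding coeff_inner_def
    by (intro sum.cong refl) (auto simp: omega_lower_def index_pairs_def sum_distrib_left)
  finally show ?thesis .
qed

lemma coeff_inner_self_eq_0:
  assumes "coeff_inner n x x = 0" "z \<in> index_pairs n"
  shows "x z = 0"
proof -
  have "(\<Sum>z\<in>index_pairs n. complex_of_real ((cmod (x z))\<^sup>2)) = 0"
    using assms(1) unfolding coeff_inner_def complex_norm_square .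
  then have "(\<Sum>z\<in>index_pairs n. (cmod (x z))\<^sup>2) = 0"
    by (metis of_real_eq_0_iff of_real_sum)
  then show ?thesis
    using assms(2) by (simp add: sum_nonneg_eq_0_iff[OF finite_index_pairs])
qed

lemma omega_raise_eq_0_if_lower_eq_0:
  assumes "bidegree n a b c" "a + b = int n" "omega_lower n c = (\<lambda>_. 0)"
  shows "omega_raise n c = (\<lambda>_. 0)"
proof
  fix z
  have "int n - a - b = 0" using assms(2) by simp
  then have "omega_lower n (omega_raise n c) = omega_raise n (\<lambda>_. 0)"
    using omega_commutator[OF assms(1)] assms(3) by (simp add: fun_eq_iff)
  then have "omega_lower n (omega_raise n c) = (\<lambda>_. 0)"
    by (simp add: fun_eq_iff omega_raise_def)
  then have "coeff_inner n (omega_raise n c) (omega_raise n c) = 0"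
    unfolding omega_raise_adjoint by (simp add: coeff_inner_def)
  then show "omega_raise n c z = 0"
  proof (cases "z \<in> index_pairs n")
    case False
    then show ?thesis by (auto simp: omega_raise_def index_pairs_def split: prod.splits)
  qed (rule coeff_inner_self_eq_0)
qed

text \<open>The recursion a_{r+1} (r+1)(r+2) = -a_r of these coefficients is what makes the
  commutator terms of omega_lower (primitive_part n d) cancel in pairs.\<close>
definition primitive_coeff :: "nat \<Rightarrow> complex" where
  "primitive_coeff r = (-1) ^ r / of_nat (fact r * fact (Suc r))"

definition primitive_part :: "nat \<Rightarrow> coeffs \<Rightarrow> coeffs" where
  "primitive_part n d = (\<lambda>x. \<Sum>r\<le>n. primitive_coeff r * (omega_raise n ^^ r) ((omega_lower n ^^ r) d) x)"

lemma primitive_coeff_Suc: "primitive_coeff (Suc r) * of_nat (Suc r * Suc (Suc r)) = - primitive_coeff r"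
proof -
  let ?N = "of_nat (Suc r * Suc (Suc r)) :: complex" and ?M = "of_nat (fact r * fact (Suc r)) :: complex"
  have "fact (Suc r) * fact (Suc (Suc r)) = (Suc r * Suc (Suc r)) * (fact r * fact (Suc r) :: nat)"
    by (simp add: algebra_simps)
  then have "primitive_coeff (Suc r) * ?N = (-1) ^ Suc r / (?N * ?M) * ?N"
    unfolding primitive_coeff_def of_nat_mult[of "Suc r * Suc (Suc r)", symmetric] by simp
  also have "\<dots> = (-1) ^ Suc r / ?M"
    by (simp del: of_nat_mult of_nat_Suc)
  finally show ?thesis by (simp add: primitive_coeff_def)
qed

lemma omega_lower_primitive_part:
  assumes "bidegree n a b d" "a + b = int n"
  shows "omega_lower n (primitive_part n d) = (\<lambda>_. 0)"
proof
  fix x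
  define D where "D r = (omega_lower n ^^ r) d" for r
  define u where "u r = (omega_raise n ^^ r) (D (Suc r)) x" for r
  have D: "bidegree n (a - int r) (b - int r) (D r)" for r
    unfolding D_def by (rule bidegree_lower_pow[OF assms(1)])
  have "D (Suc n) = (\<lambda>_. 0)"
    using assms(2) by (intro bidegree_negative_eq_0[OF D]) linarith
  then have "u n = 0" by (simp add: u_def omega_raise_pow_zero)
  have "omega_lower n ((omega_raise n ^^ r) (D r)) x
      = u r + of_nat (r * Suc r) * (omega_raise n ^^ (r - 1)) (D r) x" for r
  proof -
    have "int r * (int n - (a - int r) - (b - int r) - int r + 1) = int (r * Suc r)"
      using assms(2) by (simp add: algebra_simps)
    then show ?thesis
      using omega_commutator_pow[OF D[of r], of r x] by (simp add: u_def D_def)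
  qed
  then have "omega_lower n (primitive_part n d) x = (\<Sum>r\<le>n. primitive_coeff r * u r)
      + (\<Sum>r<Suc n. primitive_coeff r * of_nat (r * Suc r) * (omega_raise n ^^ (r - 1)) (D r) x)"
    unfolding primitive_part_def omega_lower_sum
    by (simp add: D_def sum.distrib lessThan_Suc_atMost algebra_simps)
  also have "(\<Sum>r<Suc n. primitive_coeff r * of_nat (r * Suc r) * (omega_raise n ^^ (r - 1)) (D r) x)
      = (\<Sum>r<n. primitive_coeff (Suc r) * of_nat (Suc r * Suc (Suc r)) * u r)"
    by (subst sum.lessThan_Suc_shift) (simp add: u_def)
  also have "\<dots> = (\<Sum>r<n. - primitive_coeff r * u r)"
    by (simp only: primitive_coeff_Suc)
  finally show "omega_lower n (primitive_part n d) x = 0"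
    using \<open>u n = 0\<close> by (simp add: lessThan_Suc_atMost[symmetric] sum_negf)
qed

lemma primitive_part_eq:
  assumes "bidegree n a b d"
  obtains \<sigma> where "bidegree n (a - 1) (b - 1) \<sigma>" "primitive_part n d = (\<lambda>x. d x + omega_raise n \<sigma> x)"
proof
  define \<sigma> where "\<sigma> = (\<lambda>x. \<Sum>r\<in>{1..n}. primitive_coeff r * (omega_raise n ^^ (r - 1)) ((omega_lower n ^^ r) d) x)"
  show "bidegree n (a - 1) (b - 1) \<sigma>"
    unfolding \<sigma>_def
  proof (rule bidegree_sum)
    fix r :: nat assume "r \<in> {1..n}"
    then show "bidegree n (a - 1) (b - 1) ((omega_raise n ^^ (r - 1)) ((omega_lower n ^^ r) d))"
      using bidegree_raise_pow[OF bidegree_lower_pow[OF assms], of r "r - 1"] by (simp add: of_nat_diff)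
  qed
  have "(omega_raise n ^^ r) c = omega_raise n ((omega_raise n ^^ (r - 1)) c)" if "r \<in> {1..n}" for r c
    using that by (metis Suc_diff_1 atLeastAtMost_iff funpow.simps(2) less_eq_Suc_le o_apply One_nat_def)
  then have "omega_raise n \<sigma> = (\<lambda>x. \<Sum>r\<in>{1..n}. primitive_coeff r * (omega_raise n ^^ r) ((omega_lower n ^^ r) d) x)"
    unfolding \<sigma>_def omega_raise_sum by simp
  moreover have "{..n} = insert 0 {1..n}" by auto
  ultimately show "primitive_part n d = (\<lambda>x. d x + omega_raise n \<sigma> x)"
    by (simp add: primitive_part_def primitive_coeff_def)
qed

lemma primitive_decomposition:
  assumes "bidegree n a b d" "a + b = int n"
  obtains c \<sigma> where "bidegree n a b c" "omega_raise n c = (\<lambda>_. 0)"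
    "c = (\<lambda>x. d x + omega_raise n \<sigma> x)" "bidegree n (a - 1) (b - 1) \<sigma>"
proof -
  have c: "bidegree n a b (primitive_part n d)"
    unfolding primitive_part_def
  proof (rule bidegree_sum)
    fix r
    show "bidegree n a b ((omega_raise n ^^ r) ((omega_lower n ^^ r) d))"
      using bidegree_raise_pow[OF bidegree_lower_pow[OF assms(1), of r], of r] by simp
  qed
  obtain \<sigma> where "bidegree n (a - 1) (b - 1) \<sigma>" "primitive_part n d = (\<lambda>x. d x + omega_raise n \<sigma> x)"
    using primitive_part_eq[OF assms(1)] .
  then show ?thesis
    using that c omega_raise_eq_0_if_lower_eq_0[OF c assms(2) omega_lower_primitive_part[OF assms]]
    by blast
qed

section \<open>The image of Q\<close>

lemma Q_tau_basic_form_xy: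
  assumes "distinct s" "set s = A \<union> (\<lambda>i. n + i) ` B" "A \<subseteq> {..<n}" "B \<subseteq> {..<n}"
    "card A + card B = n" "card B = k"
  obtains C where "C \<noteq> 0" "\<And>W. Q_tau n k (basic_form n s) W = C * minor k W ({..<n} - A) * minor k W B"
proof -
  have "finite A" "finite B" using assms(3,4) finite_subset by auto
  then have "card (A \<union> (\<lambda>i. n + i) ` B) = card A + card B"
    using assms(3) by (subst card_Un_disjoint) (auto simp: card_image)
  then have "length s = n"
    using assms(2,5) distinct_card[OF assms(1)] by simp
  moreover have "set s \<subseteq> {..<2 * n}" "{..<n} - set s = {..<n} - A" "{c. n + c \<in> set s} = B"
    using assms(2,3,4) by auto
  ultimately show ?thesis
    using Q_tau_basic_form[OF assms(1), of n k] assms(6) that by auto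
qed

definition lambda_indices :: "nat \<Rightarrow> nat \<Rightarrow> (nat set \<times> nat set) set" where
  "lambda_indices n k = {(I, J). I \<subseteq> {..<n} \<and> J \<subseteq> {..<n} \<and> card I = n - k \<and> card J = k}"

definition minor_indices :: "nat \<Rightarrow> nat \<Rightarrow> (nat set \<times> nat set) set" where
  "minor_indices n k = {(\<alpha>, \<beta>). \<alpha> \<subseteq> {..<n} \<and> \<beta> \<subseteq> {..<n} \<and> card \<alpha> = k \<and> card \<beta> = k}"

lemma Lambda_eq: "Lambda n k = {\<tau>. \<exists>c. \<tau> = (\<lambda>f. \<Sum>(I, J)\<in>lambda_indices n k. c (I, J) * dxdy n I J f)}"
  by (simp add: Lambda_def lambda_indices_def atLeast0LessThan)

lemma M2_eq: "M2 n k = {Q. \<exists>c. Q = (\<lambda>W. \<Sum>(\<alpha>, \<beta>)\<in>minor_indices n k. c (\<alpha>, \<beta>) * minor k W \<alpha> * minor k W \<beta>)}"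
  by (simp add: M2_def minor_indices_def atLeast0LessThan)

lemma lambda_indices_subset: "lambda_indices n k \<subseteq> index_pairs n"
  by (auto simp: lambda_indices_def index_pairs_def)

lemma finite_lambda_indices: "finite (lambda_indices n k)"
  using finite_subset[OF lambda_indices_subset finite_index_pairs] .

lemma bij_betw_lambda_minor_indices:
  assumes "k \<le> n"
  shows "bij_betw (\<lambda>(I, J). ({..<n} - I, J)) (lambda_indices n k) (minor_indices n k)"
  by (rule bij_betw_byWitness[where f' = "\<lambda>(I, J). ({..<n} - I, J)"])
     (use assms in \<open>auto simp: lambda_indices_def minor_indices_def card_Diff_subset finite_subset\<close>)

lemma Q_tau_basic_form_family:
  assumes "k \<le> n" "\<And>x. x \<in> lambda_indices n k \<Longrightarrow> distinct (w x) \<and> set (w x) = fst x \<union> (\<lambda>i. n + i) ` snd x"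
  obtains C where "\<And>x. x \<in> lambda_indices n k \<Longrightarrow> C x \<noteq> 0"
    "\<And>x W. x \<in> lambda_indices n k \<Longrightarrow>
      Q_tau n k (basic_form n (w x)) W = C x * minor k W ({..<n} - fst x) * minor k W (snd x)"
proof -
  have "\<forall>x\<in>lambda_indices n k. \<exists>C. C \<noteq> 0 \<and>
      (\<forall>W. Q_tau n k (basic_form n (w x)) W = C * minor k W ({..<n} - fst x) * minor k W (snd x))"
  proof
    fix x assume x: "x \<in> lambda_indices n k"
    then have "fst x \<subseteq> {..<n}" "snd x \<subseteq> {..<n}" "card (fst x) + card (snd x) = n" "card (snd x) = k"
      using assms(1) by (auto simp: lambda_indices_def)
    then show "\<exists>C. C \<noteq> 0 \<and>
        (\<forall>W. Q_tau n k (basic_form n (w x)) W = C * minor k W ({..<n} - fst x) * minor k W (snd x))"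
      using Q_tau_basic_form_xy[of "w x"] assms(2)[OF x] by metis
  qed
  from bchoice[OF this] show ?thesis
    using that by blast
qed

lemma Q_tau_Lambda_in_M2:
  assumes "k \<le> n" "\<tau> \<in> Lambda n k"
  shows "Q_tau n k \<tau> \<in> M2 n k"
proof -
  obtain c where \<tau>: "\<tau> = (\<lambda>f. \<Sum>(I, J)\<in>lambda_indices n k. c (I, J) * dxdy n I J f)"
    using assms(2) unfolding Lambda_eq by blast
  have "distinct (sorted_list_of_set I @ map (\<lambda>j. n + j) (sorted_list_of_set J)) \<and>
      set (sorted_list_of_set I @ map (\<lambda>j. n + j) (sorted_list_of_set J)) = I \<union> (\<lambda>i. n + i) ` J"
    if "(I, J) \<in> lambda_indices n k" for I J
    using that finite_subset[of I "{..<n}"] finite_subset[of J "{..<n}"]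
    by (auto simp: lambda_indices_def distinct_map inj_on_def)
  then obtain C where C: "\<And>I J W. (I, J) \<in> lambda_indices n k \<Longrightarrow>
      Q_tau n k (dxdy n I J) W = C (I, J) * minor k W ({..<n} - I) * minor k W J"
    using Q_tau_basic_form_family[OF assms(1),
        of "\<lambda>x. sorted_list_of_set (fst x) @ map (\<lambda>j. n + j) (sorted_list_of_set (snd x))"]
    unfolding dxdy_def by (metis fst_conv snd_conv prod.collapse)
  define c' where "c' = (\<lambda>(\<alpha>, \<beta>). c ({..<n} - \<alpha>, \<beta>) * C ({..<n} - \<alpha>, \<beta>))"
  have "Q_tau n k \<tau> W = (\<Sum>(\<alpha>, \<beta>)\<in>minor_indices n k. c' (\<alpha>, \<beta>) * minor k W \<alpha> * minor k W \<beta>)" for W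
  proof -
    have "Q_tau n k \<tau> W = (\<Sum>(I, J)\<in>lambda_indices n k. c (I, J) * Q_tau n k (dxdy n I J) W)"
      unfolding \<tau> split_def by (rule Q_tau_sum[OF finite_lambda_indices])
    also have "\<dots> = (\<Sum>(I, J)\<in>lambda_indices n k. c' ({..<n} - I, J) * minor k W ({..<n} - I) * minor k W J)"
    proof (intro sum.cong refl, clarify)
      fix I J assume IJ: "(I, J) \<in> lambda_indices n k"
      then have "{..<n} - ({..<n} - I) = I" by (auto simp: lambda_indices_def)
      then show "c (I, J) * Q_tau n k (dxdy n I J) W
          = c' ({..<n} - I, J) * minor k W ({..<n} - I) * minor k W J"
        by (simp add: C[OF IJ] c'_def)
    qed
    also have "\<dots> = (\<Sum>(\<alpha>, \<beta>)\<in>minor_indices n k. c' (\<alpha>, \<beta>) * minor k W \<alpha> * minor k W \<beta>)"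
      using sum.reindex_bij_betw[OF bij_betw_lambda_minor_indices[OF assms(1)],
          of "\<lambda>(\<alpha>, \<beta>). c' (\<alpha>, \<beta>) * minor k W \<alpha> * minor k W \<beta>"]
      by (simp add: case_prod_unfold)
    finally show ?thesis .
  qed
  then show ?thesis unfolding M2_eq by blast
qed

lemma sum_omega_pairs_interleaved:
  assumes "\<And>x. c x \<noteq> 0 \<Longrightarrow> x \<in> index_pairs n \<and> card (fst x) + card (snd x) + 2 \<le> m"
  shows "(\<Sum>x\<in>index_pairs n. c x * (\<Sum>i<n. basic_form m (i # (n + i) # interleaved n (fst x) (snd x)) f))
    = (\<Sum>x\<in>index_pairs n. omega_raise n c x * basic_form m (interleaved n (fst x) (snd x)) f)"
proof -
  define E where "E A B = basic_form m (interleaved n A B) f" for A B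
  have "c x * (\<Sum>i<n. basic_form m (i # (n + i) # interleaved n (fst x) (snd x)) f)
      = (\<Sum>i\<in>{..<n} - (fst x \<union> snd x). c (insert i (fst x) - {i}, insert i (snd x) - {i})
          * E (insert i (fst x)) (insert i (snd x)))" for x
  proof (cases "c x = 0")
    case False
    then have x: "fst x \<subseteq> {..<n}" "snd x \<subseteq> {..<n}" "card (fst x) + card (snd x) + 2 \<le> m"
      using assms[of x] by (auto simp: index_pairs_def)
    have "(\<Sum>i<n. basic_form m (i # (n + i) # interleaved n (fst x) (snd x)) f)
        = (\<Sum>i\<in>{..<n} - (fst x \<union> snd x). E (insert i (fst x)) (insert i (snd x)))"
      by (rule sum.mono_neutral_cong_right) (auto simp: basic_form_pair_interleaved[OF _ x] E_def)
    moreover have "(insert i (fst x) - {i}, insert i (snd x) - {i}) = x" if "i \<in> {..<n} - (fst x \<union> snd x)" for i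
      using that by auto
    ultimately show ?thesis by (simp add: sum_distrib_left)
  qed simp
  then have "(\<Sum>x\<in>index_pairs n. c x * (\<Sum>i<n. basic_form m (i # (n + i) # interleaved n (fst x) (snd x)) f))
      = (\<Sum>(A, B)\<in>index_pairs n. \<Sum>i\<in>{..<n} - (A \<union> B). c (insert i A - {i}, insert i B - {i}) * E (insert i A) (insert i B))"
    by (simp add: split_def)
  also have "\<dots> = (\<Sum>(A, B)\<in>index_pairs n. \<Sum>i\<in>A \<inter> B. c (A - {i}, B - {i}) * E A B)"
    by (rule sum_index_pairs_insert[symmetric])
  also have "\<dots> = (\<Sum>x\<in>index_pairs n. omega_raise n c x * E (fst x) (snd x))"
    by (intro sum.cong refl) (auto simp: omega_raise_def index_pairs_def sum_distrib_right)
  finally show ?thesis by (simp add: E_def)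
qed

lemma wedge_omega_interleaved:
  assumes "\<And>x. c x \<noteq> 0 \<Longrightarrow> x \<in> index_pairs n \<and> card (fst x) + card (snd x) \<le> n"
  shows "wedge 2 n (omega_s n) (\<lambda>f. \<Sum>x\<in>index_pairs n. c x * basic_form n (interleaved n (fst x) (snd x)) f) f
    = (\<Sum>x\<in>index_pairs n. omega_raise n c x * basic_form (2 + n) (interleaved n (fst x) (snd x)) f)"
proof -
  have "wedge 2 n (omega_s n) (\<lambda>f. \<Sum>x\<in>index_pairs n. c x * basic_form n (interleaved n (fst x) (snd x)) f) f
      = (\<Sum>i<n. \<Sum>x\<in>index_pairs n. c x * basic_form (2 + n) (i # (n + i) # interleaved n (fst x) (snd x)) f)"
    unfolding omega_s_eq_sum wedge_sum by (simp add: wedge_basic_form)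
  also have "\<dots> = (\<Sum>x\<in>index_pairs n. c x * (\<Sum>i<n. basic_form (2 + n) (i # (n + i) # interleaved n (fst x) (snd x)) f))"
    by (subst sum.swap) (simp add: sum_distrib_left)
  also have "\<dots> = (\<Sum>x\<in>index_pairs n. omega_raise n c x * basic_form (2 + n) (interleaved n (fst x) (snd x)) f)"
    using assms by (intro sum_omega_pairs_interleaved) auto
  finally show ?thesis .
qed

lemma Q_tau_omega_raise_interleaved:
  assumes "bidegree n a b \<sigma>" "a + b + 2 = int n"
  shows "Q_tau n k (\<lambda>f. \<Sum>x\<in>index_pairs n. omega_raise n \<sigma> x * basic_form n (interleaved n (fst x) (snd x)) f) W = 0"
proof -
  have supp: "x \<in> index_pairs n \<and> card (fst x) + card (snd x) + 2 = n" if "\<sigma> x \<noteq> 0" for x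
    using that assms unfolding bidegree_def index_pairs_def by (cases x) force
  have "(\<lambda>f. \<Sum>x\<in>index_pairs n. omega_raise n \<sigma> x * basic_form n (interleaved n (fst x) (snd x)) f)
      = (\<lambda>f. \<Sum>x\<in>index_pairs n. \<sigma> x * (\<lambda>g. \<Sum>i<n. basic_form n (i # (n + i) # interleaved n (fst x) (snd x)) g) f)"
    using supp by (intro ext sum_omega_pairs_interleaved[symmetric]) fastforce
  then have "Q_tau n k (\<lambda>f. \<Sum>x\<in>index_pairs n. omega_raise n \<sigma> x * basic_form n (interleaved n (fst x) (snd x)) f) W
      = (\<Sum>x\<in>index_pairs n. \<sigma> x * Q_tau n k (\<lambda>g. \<Sum>i<n. basic_form n (i # (n + i) # interleaved n (fst x) (snd x)) g) W)"
    by (simp only: Q_tau_sum[OF finite_index_pairs])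
  also have "\<dots> = 0"
  proof (rule sum.neutral, rule ballI)
    fix x
    show "\<sigma> x * Q_tau n k (\<lambda>g. \<Sum>i<n. basic_form n (i # (n + i) # interleaved n (fst x) (snd x)) g) W = 0"
      using supp[of x] Q_tau_omega_wedge_eq_0[of n k] by (cases "\<sigma> x = 0") auto
  qed
  finally show ?thesis .
qed

lemma interleaved_eq_dxdy:
  assumes "(A, B) \<in> lambda_indices n k"
  obtains \<epsilon> where "basic_form n (interleaved n A B) = (\<lambda>f. \<epsilon> * dxdy n A B f)"
proof -
  let ?s = "sorted_list_of_set A @ map (\<lambda>j. n + j) (sorted_list_of_set B)"
  have AB: "A \<subseteq> {..<n}" "B \<subseteq> {..<n}" "finite A" "finite B"
    using assms finite_subset by (auto simp: lambda_indices_def)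
  moreover have "card A + card B = n"
    using assms card_mono[OF _ AB(2)] by (auto simp: lambda_indices_def)
  ultimately
  have "distinct ?s" "set ?s = set (interleaved n A B)" "length ?s = n"
    using set_interleaved[OF AB(1,2)] by (auto simp: distinct_map inj_on_def)
  then show ?thesis
    using basic_form_set_eq[OF _ distinct_interleaved] that unfolding dxdy_def by metis
qed

lemma interleaved_sum_in_PLambda:
  assumes "k \<le> n" "bidegree n (int (n - k)) (int k) c" "omega_raise n c = (\<lambda>_. 0)"
  shows "(\<lambda>f. \<Sum>x\<in>index_pairs n. c x * basic_form n (interleaved n (fst x) (snd x)) f) \<in> PLambda n k"
proof -
  let ?\<tau> = "\<lambda>f. \<Sum>x\<in>index_pairs n. c x * basic_form n (interleaved n (fst x) (snd x)) f"
  have supp: "x \<in> lambda_indices n k" if "c x \<noteq> 0" for x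
  proof -
    obtain A B where x: "x = (A, B)" by (cases x)
    with that assms(2) have "A \<subseteq> {..<n}" "B \<subseteq> {..<n}" "int (card A) = int (n - k)" "int (card B) = int k"
      unfolding bidegree_def by blast+
    then show ?thesis using x by (simp add: lambda_indices_def)
  qed
  have "\<forall>x\<in>lambda_indices n k. \<exists>\<epsilon>. basic_form n (interleaved n (fst x) (snd x)) = (\<lambda>f. \<epsilon> * dxdy n (fst x) (snd x) f)"
    using interleaved_eq_dxdy by (metis prod.collapse)
  from bchoice[OF this] obtain \<epsilon> where \<epsilon>: "\<forall>x\<in>lambda_indices n k.
      basic_form n (interleaved n (fst x) (snd x)) = (\<lambda>f. \<epsilon> x * dxdy n (fst x) (snd x) f)" ..
  have "?\<tau> f = (\<Sum>x\<in>lambda_indices n k. c x * basic_form n (interleaved n (fst x) (snd x)) f)" for f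
    using supp by (intro sum.mono_neutral_right finite_index_pairs lambda_indices_subset) auto
  then have "?\<tau> = (\<lambda>f. \<Sum>(I, J)\<in>lambda_indices n k. (c (I, J) * \<epsilon> (I, J)) * dxdy n I J f)"
    using \<epsilon> by (auto simp: split_def intro!: sum.cong)
  then have "?\<tau> \<in> Lambda n k"
    unfolding Lambda_eq by (intro CollectI exI[of _ "\<lambda>x. c x * \<epsilon> x"]) simp
  moreover have "x \<in> index_pairs n \<and> card (fst x) + card (snd x) \<le> n" if "c x \<noteq> 0" for x
    using supp[OF that] assms(1) by (cases x) (auto simp: lambda_indices_def index_pairs_def)
  then have "wedge 2 n (omega_s n) ?\<tau> f = 0" for f
    using assms(3) by (simp add: wedge_omega_interleaved)
  ultimately show ?thesis
    by (simp add: PLambda_def)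
qed

lemma M2_subset_Q_tau_image:
  assumes "k \<le> n" "Q \<in> M2 n k"
  shows "Q \<in> Q_tau n k ` PLambda n k"
proof -
  let ?e = "\<lambda>x. basic_form n (interleaved n (fst x) (snd x))"
  obtain c where Q: "Q = (\<lambda>W. \<Sum>(\<alpha>, \<beta>)\<in>minor_indices n k. c (\<alpha>, \<beta>) * minor k W \<alpha> * minor k W \<beta>)"
    using assms(2) unfolding M2_eq by blast
  have words: "distinct (interleaved n (fst x) (snd x)) \<and>
      set (interleaved n (fst x) (snd x)) = fst x \<union> (\<lambda>i. n + i) ` snd x"
    if "x \<in> lambda_indices n k" for x
    using that distinct_interleaved set_interleaved[of "fst x" n "snd x"] by (auto simp: lambda_indices_def)
  obtain C where C: "\<And>x. x \<in> lambda_indices n k \<Longrightarrow> C x \<noteq> 0"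
    "\<And>x W. x \<in> lambda_indices n k \<Longrightarrow> Q_tau n k (?e x) W = C x * minor k W ({..<n} - fst x) * minor k W (snd x)"
    using Q_tau_basic_form_family[OF assms(1) words] by blast
  define d where "d x = (if x \<in> lambda_indices n k then c ({..<n} - fst x, snd x) / C x else 0)" for x
  have "bidegree n (int (n - k)) (int k) d"
    by (auto simp: bidegree_def d_def lambda_indices_def)
  moreover have "int (n - k) + int k = int n" using assms(1) by simp
  ultimately obtain c2 \<sigma> where c2: "bidegree n (int (n - k)) (int k) c2" "omega_raise n c2 = (\<lambda>_. 0)"
    "c2 = (\<lambda>x. d x + omega_raise n \<sigma> x)" "bidegree n (int (n - k) - 1) (int k - 1) \<sigma>"
    by (rule primitive_decomposition)
  let ?\<tau> = "\<lambda>f. \<Sum>x\<in>index_pairs n. c2 x * ?e x f"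
  have "Q_tau n k ?\<tau> = Q"
  proof
    fix W
    have "Q_tau n k ?\<tau> W = (\<Sum>x\<in>index_pairs n. d x * Q_tau n k (?e x) W)
        + Q_tau n k (\<lambda>f. \<Sum>x\<in>index_pairs n. omega_raise n \<sigma> x * ?e x f) W"
      unfolding Q_tau_sum[OF finite_index_pairs] c2(3) by (simp add: distrib_right sum.distrib)
    also have "Q_tau n k (\<lambda>f. \<Sum>x\<in>index_pairs n. omega_raise n \<sigma> x * ?e x f) W = 0"
      using assms(1) by (intro Q_tau_omega_raise_interleaved[OF c2(4)]) simp
    also have "(\<Sum>x\<in>index_pairs n. d x * Q_tau n k (?e x) W)
        = (\<Sum>(I, J)\<in>lambda_indices n k. c ({..<n} - I, J) * minor k W ({..<n} - I) * minor k W J)"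
      using C lambda_indices_subset
      by (intro sum.mono_neutral_cong_right finite_index_pairs) (auto simp: d_def)
    also have "\<dots> = Q W"
      using sum.reindex_bij_betw[OF bij_betw_lambda_minor_indices[OF assms(1)],
          of "\<lambda>(\<alpha>, \<beta>). c (\<alpha>, \<beta>) * minor k W \<alpha> * minor k W \<beta>"]
      by (simp add: Q case_prod_unfold)
    finally show "Q_tau n k ?\<tau> W = Q W" by simp
  qed
  moreover have "?\<tau> \<in> PLambda n k"
    by (rule interleaved_sum_in_PLambda[OF assms(1) c2(1,2)])
  ultimately show ?thesis by blast
qed

theorem proposition6p15:
  fixes n k :: nat
  assumes "1 \<le> k" and "k \<le> n"
  shows "Q_tau n k ` PLambda n k = M2 n k"
proof
  show "Q_tau n k ` PLambda n k \<subseteq> M2 n k"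
    using Q_tau_Lambda_in_M2[OF assms(2)] by (auto simp: PLambda_def)
  show "M2 n k \<subseteq> Q_tau n k ` PLambda n k"
    using M2_subset_Q_tau_image[OF assms(2)] by blast
qed

end
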